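(* For all integers $d,a,b,p,p'\ge0$, writing $M=\max\{p,p'\}$, \[\sum_{\mu\vdash d}\{s_\mu h_a\}_{\lambda_1=p}\otimes\{s_\mu h_b\}_{\lambda_1=p'}=\sum_{\mu\vdash d+a+b-M}\{s_\mu h_{M-b}\}_{\lambda_1=p}\otimes\{s_\mu h_{M-a}\}_{\lambda_1=p'}\] in $\Lambda\otimes\Lambda$.
   Context: $\Lambda$ is the ring of symmetric functions, $s_\lambda$ the Schur functions, $h_k$ the complete homogeneous symmetric functions, with $h_k=0$ for $k<0$ and a sum over partitions of a negative integer being empty. For $G=\sum_\lambda c_\lambda s_\lambda\in\Lambda$, $\{G\}_{\lambda_1=p}:=\sum_{\lambda:\lambda_1=p}c_\lambda s_\lambda$. *)

theory Defs
  imports Main "HOL-Library.Poly_Mapping"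
begin

definition is_partition :: "nat list \<Rightarrow> bool" where
  "is_partition la \<longleftrightarrow> sorted_wrt (\<ge>) la \<and> (\<forall>x\<in>set la. 0 < x)"

definition partitions_of :: "int \<Rightarrow> nat list set" where
  "partitions_of n = {la. is_partition la \<and> int (sum_list la) = n}"

definition first_part :: "nat list \<Rightarrow> nat" where
  "first_part la = (if la = [] then 0 else hd la)"

definition cells :: "nat list \<Rightarrow> (nat \<times> nat) set" where
  "cells la = {(i, j). i < length la \<and> j < la ! i}"

text \<open>A monomial is a finitely supported exponent vector; a (formal) series is a
  coefficient function on monomials. Lambda embeds into such series.\<close>
type_synonym monom = "nat \<Rightarrow>\<^sub>0 nat"
type_synonym series = "monom \<Rightarrow> int"

text \<open>Semistandard Young tableaux of shape lambda (entries = variable indices),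
  with value 0 outside the diagram so that tableaux are unique functions.\<close>
definition ssyt :: "nat list \<Rightarrow> (nat \<times> nat \<Rightarrow> nat) set" where
  "ssyt la = {T. (\<forall>c. c \<notin> cells la \<longrightarrow> T c = 0)
     \<and> (\<forall>i j. (i, Suc j) \<in> cells la \<longrightarrow> T (i, j) \<le> T (i, Suc j))
     \<and> (\<forall>i j. (Suc i, j) \<in> cells la \<longrightarrow> T (i, j) < T (Suc i, j))}"

definition content :: "nat list \<Rightarrow> (nat \<times> nat \<Rightarrow> nat) \<Rightarrow> monom \<Rightarrow> bool" where
  "content la T m \<longleftrightarrow> (\<forall>k. Poly_Mapping.lookup m k = card {c \<in> cells la. T c = k})"

definition schur :: "nat list \<Rightarrow> series" where
  "schur la = (\<lambda>m. int (card {T \<in> ssyt la. content la T m}))"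

definition sf_zero :: series where "sf_zero = (\<lambda>m. 0)"

definition hsf :: "int \<Rightarrow> series" where
  "hsf k = (if k < 0 then sf_zero else if k = 0 then schur [] else schur [nat k])"

definition sf_mult :: "series \<Rightarrow> series \<Rightarrow> series" where
  "sf_mult f g = (\<lambda>m. \<Sum>(m1, m2)\<in>{(m1, m2). m1 + m2 = m}. f m1 * g m2)"

definition schur_expansion :: "series \<Rightarrow> (nat list \<Rightarrow> int) \<Rightarrow> bool" where
  "schur_expansion G c \<longleftrightarrow> finite {la. c la \<noteq> 0} \<and> (\<forall>la. c la \<noteq> 0 \<longrightarrow> is_partition la)
     \<and> G = (\<lambda>m. \<Sum>la\<in>{la. c la \<noteq> 0}. c la * schur la m)"

definition first_row_part :: "nat \<Rightarrow> series \<Rightarrow> series" where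
  "first_row_part p G = (let c = (THE c. schur_expansion G c) in
     (\<lambda>m. \<Sum>la\<in>{la. c la \<noteq> 0 \<and> first_part la = p}. c la * schur la m))"

text \<open>Lambda (x) Lambda embedded into series in two alphabets x, y.\<close>
type_synonym series2 = "monom \<times> monom \<Rightarrow> int"

definition sf_tensor :: "series \<Rightarrow> series \<Rightarrow> series2" where
  "sf_tensor f g = (\<lambda>(m1, m2). f m1 * g m2)"

end

theory Submission
  imports Defs
begin

text \<open>
  By the Pieri rule, \<open>s\<^sub>\<mu> h\<^sub>a\<close> is the sum of the \<open>s\<^sub>\<lambda>\<close> for which \<open>\<lambda>/\<mu>\<close> is a horizontal
  strip of size \<open>a\<close>, i.e. \<open>\<lambda>\<^sub>i\<^sub>+\<^sub>1 \<le> \<mu>\<^sub>i \<le> \<lambda>\<^sub>i\<close>. So the coefficient of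
  \<open>s\<^sub>\<lambda> \<otimes> s\<^sub>\<nu>\<close> on either side counts the \<open>\<mu>\<close> of a prescribed size in the box
  \<open>max \<lambda>\<^sub>i\<^sub>+\<^sub>1 \<nu>\<^sub>i\<^sub>+\<^sub>1 \<le> \<mu>\<^sub>i \<le> min \<lambda>\<^sub>i \<nu>\<^sub>i\<close>. Reflecting every \<open>\<mu>\<^sub>i\<close> in its interval is an
  involution of the box sending \<open>|\<mu>|\<close> to \<open>|\<lambda>| + |\<nu>| - max \<lambda>\<^sub>1 \<nu>\<^sub>1 - |\<mu>|\<close>; when
  \<open>\<lambda>\<^sub>1 = p\<close> and \<open>\<nu>\<^sub>1 = p'\<close> it exchanges the \<open>\<mu>\<close> counted on the left with those counted on
  the right.

  The Pieri rule is proved for Kostka numbers by induction on the number of letters, removing the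
  largest letter of a tableau (branching rule); the induction step reduces to the same reflection.
  Projecting onto \<open>\<lambda>\<^sub>1 = p\<close> is meaningful because Schur expansions are unique, as Kostka
  numbers are unitriangular with respect to dominance.
\<close>

section \<open>Partitions as finitely supported sequences\<close>

definition finitely_supported :: "(nat \<Rightarrow> nat) \<Rightarrow> bool" where
  "finitely_supported f \<longleftrightarrow> (\<exists>L. \<forall>i\<ge>L. f i = 0)"

definition partition_seq :: "(nat \<Rightarrow> nat) \<Rightarrow> bool" where
  "partition_seq f \<longleftrightarrow> (\<forall>i. f (Suc i) \<le> f i) \<and> finitely_supported f"

definition seq_size :: "(nat \<Rightarrow> nat) \<Rightarrow> nat" where
  "seq_size f = sum f {i. 0 < f i}"

text \<open>For partitions, \<open>interlaces \<mu> \<lambda>\<close> says that \<open>\<lambda>/\<mu>\<close> is a horizontal strip.\<close>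

definition interlaces :: "(nat \<Rightarrow> nat) \<Rightarrow> (nat \<Rightarrow> nat) \<Rightarrow> bool" where
  "interlaces k f \<longleftrightarrow> (\<forall>i. f (Suc i) \<le> k i \<and> k i \<le> f i)"

lemma finitely_supportedE:
  assumes "finitely_supported f"
  obtains L where "\<forall>i\<ge>L. f i = 0"
  using assms unfolding finitely_supported_def by blast

lemma partition_seq_Suc_le: "partition_seq f \<Longrightarrow> f (Suc i) \<le> f i"
  unfolding partition_seq_def by blast

lemma partition_seq_finitely_supported: "partition_seq f \<Longrightarrow> finitely_supported f"
  unfolding partition_seq_def by blast

lemma seq_size_eq_sum_lessThan:
  assumes "\<forall>i\<ge>L. f i = 0"
  shows "seq_size f = (\<Sum>i<L. f i)"
proof -
  have "{i. 0 < f i} \<subseteq> {..<L}"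
    using assms by (auto simp: not_less[symmetric])
  then show ?thesis
    unfolding seq_size_def by (intro sum.mono_neutral_left) auto
qed

lemma seq_size_Suc_shift:
  assumes "finitely_supported f"
  shows "seq_size f = f 0 + seq_size (\<lambda>i. f (Suc i))"
proof -
  obtain L where L: "\<forall>i\<ge>L. f i = 0"
    using assms by (rule finitely_supportedE)
  then have "seq_size f = (\<Sum>i<Suc L. f i)"
    by (intro seq_size_eq_sum_lessThan) auto
  also have "\<dots> = f 0 + (\<Sum>i<L. f (Suc i))"
    by (rule sum.lessThan_Suc_shift)
  also have "(\<Sum>i<L. f (Suc i)) = seq_size (\<lambda>i. f (Suc i))"
    using L by (intro seq_size_eq_sum_lessThan[symmetric]) auto
  finally show ?thesis .
qed

lemma seq_size_mono:
  assumes "\<And>i. k i \<le> f i" and "finitely_supported f"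
  shows "seq_size k \<le> seq_size f"
proof -
  obtain L where L: "\<forall>i\<ge>L. f i = 0"
    using assms(2) by (rule finitely_supportedE)
  moreover from L assms(1) have "\<forall>i\<ge>L. k i = 0"
    by (metis le_zero_eq)
  ultimately show ?thesis
    using assms(1) by (simp add: seq_size_eq_sum_lessThan sum_mono)
qed

lemma finite_pointwise_le:
  assumes "finitely_supported B"
  shows "finite {g :: nat \<Rightarrow> nat. \<forall>i. g i \<le> B i}"
proof -
  obtain L where L: "\<forall>i\<ge>L. B i = 0"
    using assms by (rule finitely_supportedE)
  define M where "M = (\<Sum>i<L. B i)"
  have "{g. \<forall>i. g i \<le> B i} \<subseteq> {g. \<forall>x. (x \<in> {..<L} \<longrightarrow> g x \<in> {..M}) \<and> (x \<notin> {..<L} \<longrightarrow> g x = 0)}"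
  proof clarify
    fix g :: "nat \<Rightarrow> nat" and x
    assume g: "\<forall>i. g i \<le> B i"
    have "B x \<le> M" if "x < L"
      unfolding M_def using that by (intro member_le_sum) auto
    then show "(x \<in> {..<L} \<longrightarrow> g x \<in> {..M}) \<and> (x \<notin> {..<L} \<longrightarrow> g x = 0)"
      using g[rule_format, of x] L by (auto simp: not_less)
  qed
  moreover have "finite {g. \<forall>x. (x \<in> {..<L} \<longrightarrow> g x \<in> {..M}) \<and> (x \<notin> {..<L} \<longrightarrow> g x = (0::nat))}"
    by (rule finite_set_of_finite_funs) auto
  ultimately show ?thesis
    by (rule finite_subset)
qed

lemma interlaces_le: "interlaces k f \<Longrightarrow> k i \<le> f i"
  unfolding interlaces_def by blast

lemma interlaces_Suc_le: "interlaces k f \<Longrightarrow> f (Suc i) \<le> k i"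
  unfolding interlaces_def by blast

lemma interlaces_finitely_supported_inner:
  "interlaces k f \<Longrightarrow> finitely_supported f \<Longrightarrow> finitely_supported k"
  unfolding interlaces_def finitely_supported_def by (metis le_zero_eq)

lemma interlaces_finitely_supported_outer:
  "interlaces k f \<Longrightarrow> finitely_supported k \<Longrightarrow> finitely_supported f"
  unfolding interlaces_def finitely_supported_def
  by (metis Suc_le_mono le_zero_eq not0_implies_Suc zero_le)

lemma interlaces_partition_seq_inner:
  assumes "interlaces k f" and "partition_seq f"
  shows "partition_seq k"
proof -
  have "k (Suc i) \<le> k i" for i
    using interlaces_le[OF assms(1), of "Suc i"] interlaces_Suc_le[OF assms(1), of i] by linarith
  moreover have "finitely_supported k"
    using assms by (meson interlaces_finitely_supported_inner partition_seq_finitely_supported)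
  ultimately show ?thesis
    unfolding partition_seq_def by blast
qed

lemma interlaces_partition_seq_outer:
  assumes "interlaces f l" and "partition_seq f"
  shows "partition_seq l"
proof -
  have "l (Suc i) \<le> l i" for i
    using interlaces_le[OF assms(1), of i] interlaces_Suc_le[OF assms(1), of i] by linarith
  moreover have "finitely_supported l"
    using assms by (meson interlaces_finitely_supported_outer partition_seq_finitely_supported)
  ultimately show ?thesis
    unfolding partition_seq_def by blast
qed

lemma interlaces_seq_size_le:
  "interlaces k f \<Longrightarrow> finitely_supported f \<Longrightarrow> seq_size k \<le> seq_size f"
  by (rule seq_size_mono) (rule interlaces_le)

lemma finite_interlacing_inner:
  assumes "finitely_supported f"
  shows "finite {k. interlaces k f \<and> P k}"
  by (rule finite_subset[OF _ finite_pointwise_le[OF assms]]) (auto simp: interlaces_def)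

lemma finite_interlacing_outer:
  assumes f: "finitely_supported f"
  shows "finite {l. interlaces f l \<and> seq_size l = n}"
proof -
  define B where "B i = (case i of 0 \<Rightarrow> n | Suc j \<Rightarrow> f j)" for i
  obtain L where "\<forall>i\<ge>L. f i = 0"
    using f by (rule finitely_supportedE)
  then have "\<forall>i\<ge>Suc L. B i = 0"
    by (auto simp: B_def split: nat.split)
  then have B: "finitely_supported B"
    unfolding finitely_supported_def by blast
  have "l i \<le> B i" if "interlaces f l" "seq_size l = n" for l i
  proof (cases i)
    case 0
    then show ?thesis
      using that seq_size_Suc_shift[OF interlaces_finitely_supported_outer[OF that(1) f]]
      by (simp add: B_def)
  qed (use that interlaces_Suc_le B_def in auto)
  then show ?thesis
    by (intro finite_subset[OF _ finite_pointwise_le[OF B]]) auto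
qed

section \<open>Reflection in the box of common interlacing sequences\<close>

definition interlace_box :: "(nat \<Rightarrow> nat) \<Rightarrow> (nat \<Rightarrow> nat) \<Rightarrow> (nat \<Rightarrow> nat) set" where
  "interlace_box f g = {k. \<forall>i. max (f (Suc i)) (g (Suc i)) \<le> k i \<and> k i \<le> min (f i) (g i)}"

definition box_reflect :: "(nat \<Rightarrow> nat) \<Rightarrow> (nat \<Rightarrow> nat) \<Rightarrow> (nat \<Rightarrow> nat) \<Rightarrow> nat \<Rightarrow> nat" where
  "box_reflect f g k = (\<lambda>i. max (f (Suc i)) (g (Suc i)) + min (f i) (g i) - k i)"

lemma interlace_box_iff: "k \<in> interlace_box f g \<longleftrightarrow> interlaces k f \<and> interlaces k g"
  unfolding interlace_box_def interlaces_def by auto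

lemma interlace_box_bounds:
  "k \<in> interlace_box f g \<Longrightarrow> max (f (Suc i)) (g (Suc i)) \<le> k i \<and> k i \<le> min (f i) (g i)"
  unfolding interlace_box_def by blast

lemma box_reflect_in_box:
  assumes "k \<in> interlace_box f g"
  shows "box_reflect f g k \<in> interlace_box f g"
  unfolding interlace_box_def box_reflect_def
proof (intro CollectI allI)
  fix i
  show "max (f (Suc i)) (g (Suc i)) \<le> max (f (Suc i)) (g (Suc i)) + min (f i) (g i) - k i
      \<and> max (f (Suc i)) (g (Suc i)) + min (f i) (g i) - k i \<le> min (f i) (g i)"
    using interlace_box_bounds[OF assms, of i] by linarith
qed

lemma box_reflect_box_reflect:
  assumes "k \<in> interlace_box f g"
  shows "box_reflect f g (box_reflect f g k) = k"
  unfolding box_reflect_def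
proof
  fix i
  show "max (f (Suc i)) (g (Suc i)) + min (f i) (g i)
      - (max (f (Suc i)) (g (Suc i)) + min (f i) (g i) - k i) = k i"
    using interlace_box_bounds[OF assms, of i] by linarith
qed

lemma seq_size_box_reflect:
  assumes f: "finitely_supported f" and g: "finitely_supported g" and k: "k \<in> interlace_box f g"
  shows "seq_size (box_reflect f g k) + seq_size k + max (f 0) (g 0) = seq_size f + seq_size g"
proof -
  obtain L1 L2 where L1: "\<forall>i\<ge>L1. f i = 0" and L2: "\<forall>i\<ge>L2. g i = 0"
    using f g by (meson finitely_supportedE)
  define L where "L = max L1 L2"
  have Lf: "\<forall>i\<ge>L. f i = 0" and Lg: "\<forall>i\<ge>L. g i = 0"
    using L1 L2 by (simp_all add: L_def)
  let ?lo = "\<lambda>i. max (f (Suc i)) (g (Suc i))" and ?hi = "\<lambda>i. min (f i) (g i)"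
  have Lk: "\<forall>i\<ge>L. k i = 0"
    using interlace_box_bounds[OF k] Lf by (metis le_zero_eq min.bounded_iff)
  have Lr: "\<forall>i\<ge>L. box_reflect f g k i = 0"
    using Lf Lg by (simp add: box_reflect_def)
  have pointwise: "box_reflect f g k i + k i = ?lo i + ?hi i" for i
    using interlace_box_bounds[OF k, of i] unfolding box_reflect_def by linarith
  have "seq_size (box_reflect f g k) + seq_size k = (\<Sum>i<L. ?lo i) + (\<Sum>i<L. ?hi i)"
    by (simp add: seq_size_eq_sum_lessThan[OF Lr] seq_size_eq_sum_lessThan[OF Lk]
        pointwise sum.distrib[symmetric])
  moreover have "max (f 0) (g 0) + (\<Sum>i<L. ?lo i) = (\<Sum>i<L. max (f i) (g i))"
  proof -
    have "(\<Sum>i<Suc L. max (f i) (g i)) = max (f 0) (g 0) + (\<Sum>i<L. ?lo i)"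
      by (rule sum.lessThan_Suc_shift)
    then show ?thesis
      using Lf Lg by simp
  qed
  moreover have "(\<Sum>i<L. max (f i) (g i)) + (\<Sum>i<L. ?hi i) = seq_size f + seq_size g"
  proof -
    have "max (f i) (g i) + min (f i) (g i) = f i + g i" for i
      by linarith
    then show ?thesis
      by (simp add: seq_size_eq_sum_lessThan[OF Lf] seq_size_eq_sum_lessThan[OF Lg]
          sum.distrib[symmetric])
  qed
  ultimately show ?thesis
    by linarith
qed

lemma card_interlace_box_reflect:
  assumes f: "finitely_supported f" and g: "finitely_supported g"
    and PQ: "\<And>s t. s + t + max (f 0) (g 0) = seq_size f + seq_size g \<Longrightarrow> P s \<longleftrightarrow> Q t"
  shows "card {k \<in> interlace_box f g. P (seq_size k)} = card {k \<in> interlace_box f g. Q (seq_size k)}"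
proof (rule bij_betw_same_card[of "box_reflect f g"], rule bij_betw_byWitness[of _ "box_reflect f g"])
  let ?r = "box_reflect f g"
  have PQ_reflect: "P (seq_size (?r k)) \<longleftrightarrow> Q (seq_size k)" "P (seq_size k) \<longleftrightarrow> Q (seq_size (?r k))"
    if "k \<in> interlace_box f g" for k
    using PQ[OF seq_size_box_reflect[OF f g that]]
      PQ[OF seq_size_box_reflect[OF f g box_reflect_in_box[OF that]]]
    by (simp_all add: box_reflect_box_reflect[OF that])
  show "\<forall>k \<in> {k \<in> interlace_box f g. P (seq_size k)}. ?r (?r k) = k"
    "\<forall>k \<in> {k \<in> interlace_box f g. Q (seq_size k)}. ?r (?r k) = k"
    by (simp_all add: box_reflect_box_reflect)
  show "?r ` {k \<in> interlace_box f g. P (seq_size k)} \<subseteq> {k \<in> interlace_box f g. Q (seq_size k)}"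
    "?r ` {k \<in> interlace_box f g. Q (seq_size k)} \<subseteq> {k \<in> interlace_box f g. P (seq_size k)}"
    by (auto simp: PQ_reflect box_reflect_in_box box_reflect_box_reflect)
qed

text \<open>A sequence interlaced by both \<open>f\<close> and \<open>g\<close> is determined by its tail, which lies in the box,
  and its size, which fixes the first entry.\<close>

lemma card_common_outer_eq_card_box:
  assumes f: "finitely_supported f"
  shows "card {l. interlaces f l \<and> interlaces g l \<and> seq_size l = n}
       = card {k \<in> interlace_box f g. seq_size k + max (f 0) (g 0) \<le> n}"
proof (rule bij_betw_same_card[of "\<lambda>l i. l (Suc i)"])
  define prepend_row where "prepend_row k = (\<lambda>i. case i of 0 \<Rightarrow> n - seq_size k | Suc j \<Rightarrow> k j)" for k :: "nat \<Rightarrow> nat"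
  have size_tail: "seq_size l = l 0 + seq_size (\<lambda>i. l (Suc i))" if "interlaces f l" for l
    by (rule seq_size_Suc_shift[OF interlaces_finitely_supported_outer[OF that f]])
  show "bij_betw (\<lambda>l i. l (Suc i)) {l. interlaces f l \<and> interlaces g l \<and> seq_size l = n}
      {k \<in> interlace_box f g. seq_size k + max (f 0) (g 0) \<le> n}"
  proof (rule bij_betw_byWitness[of _ prepend_row])
    show "\<forall>l\<in>{l. interlaces f l \<and> interlaces g l \<and> seq_size l = n}. prepend_row (\<lambda>i. l (Suc i)) = l"
      using size_tail by (auto simp: prepend_row_def split: nat.split)
    show "\<forall>k\<in>{k \<in> interlace_box f g. seq_size k + max (f 0) (g 0) \<le> n}. (\<lambda>i. prepend_row k (Suc i)) = k"
      by (simp add: prepend_row_def)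
    show "(\<lambda>l i. l (Suc i)) ` {l. interlaces f l \<and> interlaces g l \<and> seq_size l = n}
        \<subseteq> {k \<in> interlace_box f g. seq_size k + max (f 0) (g 0) \<le> n}"
      using size_tail by (fastforce simp: interlace_box_def interlaces_def)
    have "interlaces f (prepend_row k) \<and> interlaces g (prepend_row k) \<and> seq_size (prepend_row k) = n"
      if "k \<in> interlace_box f g" "seq_size k + max (f 0) (g 0) \<le> n" for k
    proof -
      have "interlaces f (prepend_row k)" "interlaces g (prepend_row k)"
        using that unfolding interlaces_def interlace_box_def prepend_row_def
        by (auto split: nat.split)
      moreover have "(\<lambda>i. prepend_row k (Suc i)) = k"
        by (simp add: prepend_row_def)
      ultimately show ?thesis
        using size_tail that(2) by (simp add: prepend_row_def)
    qed
    then show "prepend_row ` {k \<in> interlace_box f g. seq_size k + max (f 0) (g 0) \<le> n}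
        \<subseteq> {l. interlaces f l \<and> interlaces g l \<and> seq_size l = n}"
      by auto
  qed
qed

lemma card_common_inner_eq_card_common_outer:
  assumes f: "finitely_supported f" and g: "finitely_supported g"
    and size: "seq_size g + e = seq_size f + a"
  shows "card {k \<in> interlace_box f g. seq_size f \<le> seq_size k + e}
       = card {l. interlaces f l \<and> interlaces g l \<and> seq_size l = seq_size f + a}"
proof -
  have "card {k \<in> interlace_box f g. seq_size f \<le> seq_size k + e}
      = card {k \<in> interlace_box f g. seq_size k + max (f 0) (g 0) \<le> seq_size f + a}"
    by (rule card_interlace_box_reflect[OF f g]) (use size in linarith)
  also have "\<dots> = card {l. interlaces f l \<and> interlaces g l \<and> seq_size l = seq_size f + a}"
    by (rule card_common_outer_eq_card_box[OF f, symmetric])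
  finally show ?thesis .
qed

definition diagram :: "(nat \<Rightarrow> nat) \<Rightarrow> (nat \<times> nat) set" where
  "diagram f = {(i, j). j < f i}"

definition ssyt_seq :: "(nat \<Rightarrow> nat) \<Rightarrow> (nat \<times> nat \<Rightarrow> nat) set" where
  "ssyt_seq f = {T. (\<forall>c. c \<notin> diagram f \<longrightarrow> T c = 0)
     \<and> (\<forall>i j. (i, Suc j) \<in> diagram f \<longrightarrow> T (i, j) \<le> T (i, Suc j))
     \<and> (\<forall>i j. (Suc i, j) \<in> diagram f \<longrightarrow> T (i, j) < T (Suc i, j))}"

definition has_content :: "(nat \<Rightarrow> nat) \<Rightarrow> (nat \<times> nat \<Rightarrow> nat) \<Rightarrow> (nat \<Rightarrow> nat) \<Rightarrow> bool" where
  "has_content f T h \<longleftrightarrow> (\<forall>k. h k = card {c \<in> diagram f. T c = k})"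

definition kostka :: "(nat \<Rightarrow> nat) \<Rightarrow> (nat \<Rightarrow> nat) \<Rightarrow> nat" where
  "kostka f h = card {T \<in> ssyt_seq f. has_content f T h}"

lemma diagram_eq_Sigma:
  assumes "\<forall>i\<ge>L. f i = 0"
  shows "diagram f = Sigma {..<L} (\<lambda>i. {..<f i})"
  using assms unfolding diagram_def by (auto simp: not_less[symmetric])

lemma finite_diagram:
  assumes "finitely_supported f"
  shows "finite (diagram f)"
proof -
  obtain L where "\<forall>i\<ge>L. f i = 0"
    using assms by (rule finitely_supportedE)
  then show ?thesis
    by (simp add: diagram_eq_Sigma)
qed

lemma card_diagram:
  assumes "finitely_supported f"
  shows "card (diagram f) = seq_size f"
proof -
  obtain L where "\<forall>i\<ge>L. f i = 0"
    using assms by (rule finitely_supportedE)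
  then show ?thesis
    by (simp add: diagram_eq_Sigma seq_size_eq_sum_lessThan)
qed

lemma diagram_mono: "(\<And>i. k i \<le> f i) \<Longrightarrow> diagram k \<subseteq> diagram f"
  unfolding diagram_def using less_le_trans by fastforce

lemma ssyt_seqI:
  assumes "\<And>c. c \<notin> diagram f \<Longrightarrow> T c = 0"
    and "\<And>i j. (i, Suc j) \<in> diagram f \<Longrightarrow> T (i, j) \<le> T (i, Suc j)"
    and "\<And>i j. (Suc i, j) \<in> diagram f \<Longrightarrow> T (i, j) < T (Suc i, j)"
  shows "T \<in> ssyt_seq f"
  unfolding ssyt_seq_def using assms by blast

lemma ssyt_seq_outside: "T \<in> ssyt_seq f \<Longrightarrow> c \<notin> diagram f \<Longrightarrow> T c = 0"
  unfolding ssyt_seq_def by blast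

lemma ssyt_seq_row: "T \<in> ssyt_seq f \<Longrightarrow> (i, Suc j) \<in> diagram f \<Longrightarrow> T (i, j) \<le> T (i, Suc j)"
  unfolding ssyt_seq_def by blast

lemma ssyt_seq_col: "T \<in> ssyt_seq f \<Longrightarrow> (Suc i, j) \<in> diagram f \<Longrightarrow> T (i, j) < T (Suc i, j)"
  unfolding ssyt_seq_def by blast

lemma ssyt_seq_row_mono:
  assumes T: "T \<in> ssyt_seq f" and "j \<le> j'" and "(i, j') \<in> diagram f"
  shows "T (i, j) \<le> T (i, j')"
  using assms(2,3)
proof (induction j')
  case (Suc j')
  show ?case
  proof (cases "j = Suc j'")
    case False
    then have "T (i, j) \<le> T (i, j')"
      using Suc unfolding diagram_def by auto
    also have "\<dots> \<le> T (i, Suc j')"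
      using ssyt_seq_row[OF T Suc.prems(2)] .
    finally show ?thesis .
  qed simp
qed simp

lemma has_content_pos:
  assumes "has_content f T h" and "finitely_supported f" and "c \<in> diagram f"
  shows "0 < h (T c)"
proof -
  have "c \<in> {c' \<in> diagram f. T c' = T c}" and "finite {c' \<in> diagram f. T c' = T c}"
    using assms(3) finite_diagram[OF assms(2)] by simp_all
  then have "0 < card {c' \<in> diagram f. T c' = T c}"
    using card_gt_0_iff by blast
  then show ?thesis
    using assms(1) unfolding has_content_def by simp
qed

lemma finite_ssyt_content:
  assumes f: "finitely_supported f" and h: "finitely_supported h"
  shows "finite {T \<in> ssyt_seq f. has_content f T h}"
proof -
  obtain L where L: "\<forall>i\<ge>L. h i = 0"
    using h by (rule finitely_supportedE)
  have "{T \<in> ssyt_seq f. has_content f T h}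
      \<subseteq> {T. \<forall>x. (x \<in> diagram f \<longrightarrow> T x \<in> {..<L}) \<and> (x \<notin> diagram f \<longrightarrow> T x = 0)}"
  proof clarify
    fix T x
    assume T: "T \<in> ssyt_seq f" "has_content f T h"
    have "T x < L" if "x \<in> diagram f"
    proof (rule ccontr)
      assume "\<not> T x < L"
      then show False
        using has_content_pos[OF T(2) f that] L by simp
    qed
    then show "(x \<in> diagram f \<longrightarrow> T x \<in> {..<L}) \<and> (x \<notin> diagram f \<longrightarrow> T x = 0)"
      using ssyt_seq_outside[OF T(1)] by auto
  qed
  moreover have "finite {T. \<forall>x. (x \<in> diagram f \<longrightarrow> T x \<in> {..<L}) \<and> (x \<notin> diagram f \<longrightarrow> T x = 0)}"
    by (rule finite_set_of_finite_funs) (auto simp: finite_diagram[OF f])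
  ultimately show ?thesis
    by (rule finite_subset)
qed

lemma kostka_zero_content:
  assumes "finitely_supported f"
  shows "kostka f (\<lambda>_. 0) = (if f = (\<lambda>_. 0) then 1 else 0)"
proof (cases "f = (\<lambda>_. 0)")
  case True
  then have "{T \<in> ssyt_seq f. has_content f T (\<lambda>_. 0)} = {\<lambda>_. 0}"
    by (auto simp: ssyt_seq_def has_content_def diagram_def)
  then show ?thesis
    using True by (simp add: kostka_def)
next
  case False
  then obtain i where "(i, 0) \<in> diagram f"
    by (auto simp: diagram_def)
  then have none: "{T \<in> ssyt_seq f. has_content f T (\<lambda>_. 0)} = {}"
    using has_content_pos[OF _ assms] by blast
  show ?thesis
    unfolding kostka_def none using False by simp
qed

section \<open>The branching rule\<close>

text \<open>Removing the entries equal to the largest letter \<open>N\<close> from a tableau leaves a tableau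
  of the shape \<open>lower_shape N f T\<close>, which \<open>f\<close> interlaces.\<close>

definition lower_shape :: "nat \<Rightarrow> (nat \<Rightarrow> nat) \<Rightarrow> (nat \<times> nat \<Rightarrow> nat) \<Rightarrow> nat \<Rightarrow> nat" where
  "lower_shape N f T i = card {j. j < f i \<and> T (i, j) < N}"

definition restrict_tableau :: "(nat \<Rightarrow> nat) \<Rightarrow> (nat \<times> nat \<Rightarrow> nat) \<Rightarrow> nat \<times> nat \<Rightarrow> nat" where
  "restrict_tableau k T = (\<lambda>c. if c \<in> diagram k then T c else 0)"

definition extend_tableau ::
  "nat \<Rightarrow> (nat \<Rightarrow> nat) \<Rightarrow> (nat \<Rightarrow> nat) \<Rightarrow> (nat \<times> nat \<Rightarrow> nat) \<Rightarrow> nat \<times> nat \<Rightarrow> nat" where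
  "extend_tableau N k f T = (\<lambda>c. if c \<in> diagram k then T c else if c \<in> diagram f then N else 0)"

lemma downward_closed_eq_lessThan_card:
  fixes S :: "nat set"
  assumes "finite S" and "\<And>j j'. j \<in> S \<Longrightarrow> j' \<le> j \<Longrightarrow> j' \<in> S"
  shows "S = {..<card S}"
proof (intro set_eqI iffI)
  fix j
  assume "j \<in> S"
  then have "{..j} \<subseteq> S"
    using assms(2) by auto
  then have "card {..j} \<le> card S"
    by (rule card_mono[OF assms(1)])
  then show "j \<in> {..<card S}"
    by simp
next
  fix j
  assume j: "j \<in> {..<card S}"
  show "j \<in> S"
  proof (rule ccontr)
    assume "j \<notin> S"
    then have "S \<subseteq> {..<j}"
      using assms(2) by (meson lessThan_iff not_le subsetI)
    then have "card S \<le> j"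
      using card_mono[of "{..<j}" S] by simp
    then show False
      using j by simp
  qed
qed

lemma diagram_lower_shape:
  assumes T: "T \<in> ssyt_seq f"
  shows "diagram (lower_shape N f T) = {c \<in> diagram f. T c < N}"
proof -
  have row: "{j. j < f i \<and> T (i, j) < N} = {..<lower_shape N f T i}" for i
    unfolding lower_shape_def
  proof (rule downward_closed_eq_lessThan_card)
    show "finite {j. j < f i \<and> T (i, j) < N}"
      by (rule finite_subset[of _ "{..<f i}"]) auto
  next
    fix j j'
    assume "j \<in> {j. j < f i \<and> T (i, j) < N}" and "j' \<le> j"
    moreover from this have "T (i, j') \<le> T (i, j)"
      using ssyt_seq_row_mono[OF T] by (auto simp: diagram_def)
    ultimately show "j' \<in> {j. j < f i \<and> T (i, j) < N}"
      by auto
  qed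
  show ?thesis
  proof (intro set_eqI)
    fix c :: "nat \<times> nat"
    obtain i j where "c = (i, j)"
      by (cases c)
    then show "c \<in> diagram (lower_shape N f T) \<longleftrightarrow> c \<in> {c \<in> diagram f. T c < N}"
      using row[of i] by (auto simp: diagram_def)
  qed
qed

lemma has_content_entries_le:
  assumes "has_content f T h" and "finitely_supported f" and "\<forall>k>N. h k = 0"
    and "c \<in> diagram f"
  shows "T c \<le> N"
proof (rule ccontr)
  assume "\<not> T c \<le> N"
  then show False
    using has_content_pos[OF assms(1,2,4)] assms(3) by simp
qed

lemma interlaces_lower_shape:
  assumes f: "partition_seq f" and T: "T \<in> ssyt_seq f" and bound: "\<forall>c\<in>diagram f. T c \<le> N"
  shows "interlaces (lower_shape N f T) f"
  unfolding interlaces_def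
proof
  fix i
  have fin: "finite {j. j < f i \<and> T (i, j) < N}"
    by (rule finite_subset[of _ "{..<f i}"]) auto
  have "lower_shape N f T i \<le> card {..<f i}"
    unfolding lower_shape_def by (rule card_mono) auto
  moreover have "{..<f (Suc i)} \<subseteq> {j. j < f i \<and> T (i, j) < N}"
  proof
    fix j
    assume "j \<in> {..<f (Suc i)}"
    then have c: "(Suc i, j) \<in> diagram f"
      by (simp add: diagram_def)
    have "T (i, j) < T (Suc i, j)"
      using ssyt_seq_col[OF T c] .
    also have "\<dots> \<le> N"
      using bound c by blast
    finally show "j \<in> {j. j < f i \<and> T (i, j) < N}"
      using c partition_seq_Suc_le[OF f, of i] by (simp add: diagram_def)
  qed
  then have "card {..<f (Suc i)} \<le> lower_shape N f T i"
    unfolding lower_shape_def by (rule card_mono[OF fin])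
  ultimately show "f (Suc i) \<le> lower_shape N f T i \<and> lower_shape N f T i \<le> f i"
    by simp
qed

lemma seq_size_lower_shape:
  assumes f: "partition_seq f" and T: "T \<in> ssyt_seq f" "has_content f T h"
    and bound: "\<forall>c\<in>diagram f. T c \<le> N"
  shows "seq_size f = seq_size (lower_shape N f T) + h N"
proof -
  have fs: "finitely_supported f"
    using f by (rule partition_seq_finitely_supported)
  have split: "{c \<in> diagram f. T c < N} \<union> {c \<in> diagram f. T c = N} = diagram f"
    using bound by fastforce
  have "card {c \<in> diagram f. T c < N} + card {c \<in> diagram f. T c = N}
      = card ({c \<in> diagram f. T c < N} \<union> {c \<in> diagram f. T c = N})"
    by (rule card_Un_disjoint[symmetric]) (use finite_diagram[OF fs] in auto)
  also have "\<dots> = seq_size f"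
    by (simp only: split card_diagram[OF fs])
  finally have "seq_size f = card {c \<in> diagram f. T c < N} + card {c \<in> diagram f. T c = N}"
    by simp
  moreover have "card {c \<in> diagram f. T c < N} = seq_size (lower_shape N f T)"
    using card_diagram[OF interlaces_finitely_supported_inner[OF interlaces_lower_shape[OF f T(1) bound] fs]]
    unfolding diagram_lower_shape[OF T(1)] .
  ultimately show ?thesis
    using T(2) by (simp add: has_content_def)
qed

lemma ssyt_restrict_tableau:
  assumes f: "partition_seq f" and T: "T \<in> ssyt_seq f" and k: "diagram k = {c \<in> diagram f. T c < N}"
  shows "restrict_tableau k T \<in> ssyt_seq k"
proof (rule ssyt_seqI)
  fix i j
  assume c: "(i, Suc j) \<in> diagram k"
  then have "(i, j) \<in> diagram k"
    using k ssyt_seq_row[OF T] by (fastforce simp: diagram_def)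
  then show "restrict_tableau k T (i, j) \<le> restrict_tableau k T (i, Suc j)"
    using c k ssyt_seq_row[OF T] by (simp add: restrict_tableau_def)
next
  fix i j
  assume c: "(Suc i, j) \<in> diagram k"
  then have "(Suc i, j) \<in> diagram f"
    using k by blast
  then have "(i, j) \<in> diagram f"
    using partition_seq_Suc_le[OF f, of i] by (auto simp: diagram_def)
  then have "(i, j) \<in> diagram k"
    using c k ssyt_seq_col[OF T] by fastforce
  then show "restrict_tableau k T (i, j) < restrict_tableau k T (Suc i, j)"
    using c k ssyt_seq_col[OF T] by (simp add: restrict_tableau_def)
qed (simp add: restrict_tableau_def)

lemma has_content_restrict_tableau:
  assumes T: "has_content f T h" and k: "diagram k = {c \<in> diagram f. T c < N}"
    and h: "\<forall>m>N. h m = 0"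
  shows "has_content k (restrict_tableau k T) (h(N := 0))"
  unfolding has_content_def
proof
  fix m
  have "{c \<in> diagram k. restrict_tableau k T c = m} = (if m < N then {c \<in> diagram f. T c = m} else {})"
    using k by (auto simp: restrict_tableau_def)
  then show "(h(N := 0)) m = card {c \<in> diagram k. restrict_tableau k T c = m}"
    using T h by (auto simp: has_content_def not_less)
qed

lemma extend_restrict_tableau:
  assumes T: "T \<in> ssyt_seq f" and k: "diagram k = {c \<in> diagram f. T c < N}"
    and bound: "\<forall>c\<in>diagram f. T c \<le> N"
  shows "extend_tableau N k f (restrict_tableau k T) = T"
proof
  fix c
  show "extend_tableau N k f (restrict_tableau k T) c = T c"
  proof (cases "c \<in> diagram f")
    case True
    then show ?thesis
      using k bound by (force simp: extend_tableau_def restrict_tableau_def)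
  next
    case False
    then show ?thesis
      using k ssyt_seq_outside[OF T False] by (simp add: extend_tableau_def restrict_tableau_def)
  qed
qed

lemma restrict_extend_tableau:
  assumes "T \<in> ssyt_seq k"
  shows "restrict_tableau k (extend_tableau N k f T) = T"
  using ssyt_seq_outside[OF assms] by (auto simp: restrict_tableau_def extend_tableau_def)

lemma ssyt_extend_tableau:
  assumes k: "interlaces k f" and T: "T \<in> ssyt_seq k" and bound: "\<forall>c\<in>diagram k. T c < N"
  shows "extend_tableau N k f T \<in> ssyt_seq f"
proof (rule ssyt_seqI)
  have sub: "diagram k \<subseteq> diagram f"
    using diagram_mono interlaces_le[OF k] by blast
  show "extend_tableau N k f T c = 0" if "c \<notin> diagram f" for c
    using that sub by (auto simp: extend_tableau_def)
next
  fix i j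
  assume c: "(i, Suc j) \<in> diagram f"
  then have "(i, j) \<in> diagram f"
    by (simp add: diagram_def)
  moreover have "(i, j) \<in> diagram k" if "(i, Suc j) \<in> diagram k"
    using that by (simp add: diagram_def)
  ultimately show "extend_tableau N k f T (i, j) \<le> extend_tableau N k f T (i, Suc j)"
    using c bound ssyt_seq_row[OF T] by (auto simp: extend_tableau_def less_imp_le)
next
  fix i j
  assume c: "(Suc i, j) \<in> diagram f"
  then have "(i, j) \<in> diagram k"
    using interlaces_Suc_le[OF k, of i] by (simp add: diagram_def)
  then show "extend_tableau N k f T (i, j) < extend_tableau N k f T (Suc i, j)"
    using c bound ssyt_seq_col[OF T] by (auto simp: extend_tableau_def)
qed

lemma has_content_extend_tableau:
  assumes k: "interlaces k f" and f: "finitely_supported f"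
    and T: "has_content k T (h(N := 0))" and bound: "\<forall>c\<in>diagram k. T c < N"
    and h: "\<forall>m>N. h m = 0" and size: "seq_size f = seq_size k + h N"
  shows "has_content f (extend_tableau N k f T) h"
  unfolding has_content_def
proof
  fix m
  have sub: "diagram k \<subseteq> diagram f"
    using diagram_mono interlaces_le[OF k] by blast
  have fk: "finitely_supported k"
    using interlaces_finitely_supported_inner[OF k f] .
  consider "m < N" | "m = N" | "N < m"
    by linarith
  then show "h m = card {c \<in> diagram f. extend_tableau N k f T c = m}"
  proof cases
    case 1
    then have "{c \<in> diagram f. extend_tableau N k f T c = m} = {c \<in> diagram k. T c = m}"
      using sub by (auto simp: extend_tableau_def)
    moreover have "(h(N := 0)) m = card {c \<in> diagram k. T c = m}"
      using T unfolding has_content_def by blast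
    ultimately show ?thesis
      using 1 by simp
  next
    case 2
    then have "{c \<in> diagram f. extend_tableau N k f T c = m} = diagram f - diagram k"
      using bound by (auto simp: extend_tableau_def)
    then show ?thesis
      using 2 size sub card_Diff_subset[OF finite_diagram[OF fk] sub]
      by (simp add: card_diagram[OF f] card_diagram[OF fk])
  next
    case 3
    then have none: "{c \<in> diagram f. extend_tableau N k f T c = m} = {}"
      using bound by (auto simp: extend_tableau_def)
    show ?thesis
      unfolding none using 3 h by simp
  qed
qed

lemma lower_shape_extend_tableau:
  assumes k: "interlaces k f" and bound: "\<forall>c\<in>diagram k. T c < N"
  shows "lower_shape N f (extend_tableau N k f T) = k"
proof
  fix i
  have "{j. j < f i \<and> extend_tableau N k f T (i, j) < N} = {..<k i}"
    using bound interlaces_le[OF k, of i] by (auto simp: extend_tableau_def diagram_def)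
  then show "lower_shape N f (extend_tableau N k f T) i = k i"
    by (simp add: lower_shape_def)
qed

lemma card_ssyt_with_lower_shape:
  assumes f: "partition_seq f" and h: "\<forall>m>N. h m = 0"
    and k: "interlaces k f" and size: "seq_size f = seq_size k + h N"
  shows "card {T \<in> ssyt_seq f. has_content f T h \<and> lower_shape N f T = k} = kostka k (h(N := 0))"
  unfolding kostka_def
proof (rule bij_betw_same_card[of "restrict_tableau k"],
    rule bij_betw_byWitness[of _ "extend_tableau N k f"])
  have fs: "finitely_supported f"
    using f by (rule partition_seq_finitely_supported)
  have source: "diagram k = {c \<in> diagram f. T c < N}" "\<forall>c\<in>diagram f. T c \<le> N"
    if "T \<in> {T \<in> ssyt_seq f. has_content f T h \<and> lower_shape N f T = k}" for T
  proof -
    from that have T: "T \<in> ssyt_seq f" "has_content f T h" "lower_shape N f T = k"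
      by simp_all
    show "diagram k = {c \<in> diagram f. T c < N}"
      using diagram_lower_shape[OF T(1), of N] T(3) by simp
    show "\<forall>c\<in>diagram f. T c \<le> N"
      using has_content_entries_le[OF T(2) fs h] by blast
  qed
  have target: "\<forall>c\<in>diagram k. T c < N" if "T \<in> {T \<in> ssyt_seq k. has_content k T (h(N := 0))}" for T
  proof
    fix c
    assume c: "c \<in> diagram k"
    have "0 < (h(N := 0)) (T c)"
      using that has_content_pos[OF _ interlaces_finitely_supported_inner[OF k fs] c] by blast
    then show "T c < N"
      using h by (cases "T c = N") (auto simp: not_less_iff_gr_or_eq)
  qed
  show "\<forall>T\<in>{T \<in> ssyt_seq f. has_content f T h \<and> lower_shape N f T = k}.
      extend_tableau N k f (restrict_tableau k T) = T"
    using extend_restrict_tableau source by blast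
  show "\<forall>T\<in>{T \<in> ssyt_seq k. has_content k T (h(N := 0))}.
      restrict_tableau k (extend_tableau N k f T) = T"
    using restrict_extend_tableau by blast
  show "restrict_tableau k ` {T \<in> ssyt_seq f. has_content f T h \<and> lower_shape N f T = k}
      \<subseteq> {T \<in> ssyt_seq k. has_content k T (h(N := 0))}"
  proof (rule image_subsetI)
    fix T
    assume T: "T \<in> {T \<in> ssyt_seq f. has_content f T h \<and> lower_shape N f T = k}"
    then show "restrict_tableau k T \<in> {T \<in> ssyt_seq k. has_content k T (h(N := 0))}"
      using ssyt_restrict_tableau[OF f _ source(1)[OF T]]
        has_content_restrict_tableau[OF _ source(1)[OF T] h] by simp
  qed
  show "extend_tableau N k f ` {T \<in> ssyt_seq k. has_content k T (h(N := 0))}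
      \<subseteq> {T \<in> ssyt_seq f. has_content f T h \<and> lower_shape N f T = k}"
  proof (rule image_subsetI)
    fix T
    assume T: "T \<in> {T \<in> ssyt_seq k. has_content k T (h(N := 0))}"
    then show "extend_tableau N k f T \<in> {T \<in> ssyt_seq f. has_content f T h \<and> lower_shape N f T = k}"
      using ssyt_extend_tableau[OF k _ target[OF T]]
        has_content_extend_tableau[OF k fs _ target[OF T] h size]
        lower_shape_extend_tableau[OF k target[OF T]] by simp
  qed
qed

lemma kostka_branching:
  assumes f: "partition_seq f" and h: "\<forall>m>N. h m = 0"
  shows "kostka f h = (\<Sum>k\<in>{k. interlaces k f \<and> seq_size f = seq_size k + h N}. kostka k (h(N := 0)))"
proof -
  let ?A = "{T \<in> ssyt_seq f. has_content f T h}"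
  define K where "K = {k. interlaces k f \<and> seq_size f = seq_size k + h N}"
  have fs: "finitely_supported f"
    using f by (rule partition_seq_finitely_supported)
  have fh: "finitely_supported h"
    unfolding finitely_supported_def using h by (intro exI[of _ "Suc N"]) auto
  have finA: "finite ?A"
    by (rule finite_ssyt_content[OF fs fh])
  have "lower_shape N f T \<in> K" if "T \<in> ?A" for T
  proof -
    have "\<forall>c\<in>diagram f. T c \<le> N"
      using that has_content_entries_le[OF _ fs h] by blast
    then show ?thesis
      using that interlaces_lower_shape[OF f] seq_size_lower_shape[OF f] by (simp add: K_def)
  qed
  then have "?A = (\<Union>k\<in>K. {T \<in> ssyt_seq f. has_content f T h \<and> lower_shape N f T = k})"
    by blast
  then have "kostka f h = card (\<Union>k\<in>K. {T \<in> ssyt_seq f. has_content f T h \<and> lower_shape N f T = k})"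
    unfolding kostka_def by (rule arg_cong)
  also have "\<dots> = (\<Sum>k\<in>K. card {T \<in> ssyt_seq f. has_content f T h \<and> lower_shape N f T = k})"
  proof (rule card_UN_disjoint)
    show "finite K"
      unfolding K_def by (rule finite_interlacing_inner[OF fs])
    show "\<forall>k\<in>K. finite {T \<in> ssyt_seq f. has_content f T h \<and> lower_shape N f T = k}"
      using finA by (auto intro: rev_finite_subset)
  qed auto
  also have "\<dots> = (\<Sum>k\<in>K. kostka k (h(N := 0)))"
    using card_ssyt_with_lower_shape[OF f h] by (intro sum.cong) (auto simp: K_def)
  finally show ?thesis
    unfolding K_def .
qed

section \<open>The Pieri rule for Kostka numbers\<close>

lemma sum_sum_eq_card_fibres:
  fixes g :: "'c \<Rightarrow> 'd::comm_semiring_1"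
  assumes "finite A" and "finite U" and "\<And>x. x \<in> A \<Longrightarrow> S x \<subseteq> U"
  shows "(\<Sum>x\<in>A. \<Sum>z\<in>S x. g z) = (\<Sum>z\<in>U. of_nat (card {x \<in> A. z \<in> S x}) * g z)"
proof -
  have "(\<Sum>z\<in>S x. g z) = (\<Sum>z\<in>U. if z \<in> S x then g z else 0)" if "x \<in> A" for x
    using sum.inter_restrict[OF assms(2), of g "S x"] assms(3)[OF that] by (simp add: Int_absorb1)
  then have "(\<Sum>x\<in>A. \<Sum>z\<in>S x. g z) = (\<Sum>x\<in>A. \<Sum>z\<in>U. if z \<in> S x then g z else 0)"
    by (rule sum.cong[OF refl])
  also have "\<dots> = (\<Sum>z\<in>U. \<Sum>x\<in>A. if z \<in> S x then g z else 0)"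
    by (rule sum.swap)
  also have "\<dots> = (\<Sum>z\<in>U. of_nat (card {x \<in> A. z \<in> S x}) * g z)"
    using assms(1) by (simp add: sum.inter_filter[symmetric])
  finally show ?thesis .
qed

lemma sum_sum_eq_if_card_fibres_eq:
  fixes g :: "'c \<Rightarrow> 'd::comm_semiring_1"
  assumes "finite A" and "\<And>x. x \<in> A \<Longrightarrow> finite (S x)"
    and "finite B" and "\<And>y. y \<in> B \<Longrightarrow> finite (T y)"
    and "\<And>z. card {x \<in> A. z \<in> S x} = card {y \<in> B. z \<in> T y}"
  shows "(\<Sum>x\<in>A. \<Sum>z\<in>S x. g z) = (\<Sum>y\<in>B. \<Sum>z\<in>T y. g z)"
proof -
  let ?U = "(\<Union>x\<in>A. S x) \<union> (\<Union>y\<in>B. T y)"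
  have U: "finite ?U"
    using assms(1-4) by blast
  have "(\<Sum>x\<in>A. \<Sum>z\<in>S x. g z) = (\<Sum>z\<in>?U. of_nat (card {x \<in> A. z \<in> S x}) * g z)"
    by (rule sum_sum_eq_card_fibres[OF assms(1) U]) blast
  also have "\<dots> = (\<Sum>z\<in>?U. of_nat (card {y \<in> B. z \<in> T y}) * g z)"
    using assms(5) by simp
  also have "\<dots> = (\<Sum>y\<in>B. \<Sum>z\<in>T y. g z)"
    by (rule sum_sum_eq_card_fibres[OF assms(3) U, symmetric]) blast
  finally show ?thesis .
qed

definition content_splits :: "(nat \<Rightarrow> nat) \<Rightarrow> ((nat \<Rightarrow> nat) \<times> (nat \<Rightarrow> nat)) set" where
  "content_splits h = {(g1, g2). \<forall>k. g1 k + g2 k = h k}"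

text \<open>The coefficient of \<open>x\<^sup>h\<close> in the product of the series with coefficients \<open>F\<close> and \<open>G\<close>.\<close>

definition content_conv ::
  "((nat \<Rightarrow> nat) \<Rightarrow> nat) \<Rightarrow> ((nat \<Rightarrow> nat) \<Rightarrow> nat) \<Rightarrow> (nat \<Rightarrow> nat) \<Rightarrow> nat" where
  "content_conv F G h = (\<Sum>(g1, g2)\<in>content_splits h. F g1 * G g2)"

definition one_row :: "nat \<Rightarrow> nat \<Rightarrow> nat" where
  "one_row a = (\<lambda>i. if i = 0 then a else 0)"

lemma sum_content_splits_last:
  "(\<Sum>p\<in>content_splits h. F (fst p) (snd p))
     = (\<Sum>e\<le>h N. \<Sum>p\<in>content_splits (h(N := 0)). F ((fst p)(N := e)) ((snd p)(N := h N - e)))"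
proof -
  let ?S = "{..h N} \<times> content_splits (h(N := 0))"
  define attach where "attach q = ((fst (snd q))(N := fst q), (snd (snd q))(N := h N - fst q))"
    for q :: "nat \<times> (nat \<Rightarrow> nat) \<times> (nat \<Rightarrow> nat)"
  define detach where "detach p = (fst p N, (fst p)(N := 0), (snd p)(N := 0))"
    for p :: "(nat \<Rightarrow> nat) \<times> (nat \<Rightarrow> nat)"
  have "(\<Sum>e\<le>h N. \<Sum>p\<in>content_splits (h(N := 0)). F ((fst p)(N := e)) ((snd p)(N := h N - e)))
      = (\<Sum>q\<in>?S. F (fst (attach q)) (snd (attach q)))"
    by (simp add: sum.cartesian_product split_def attach_def)
  also have "\<dots> = (\<Sum>p\<in>content_splits h. F (fst p) (snd p))"
  proof (rule sum.reindex_bij_witness[of _ detach attach])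
    fix q
    assume "q \<in> ?S"
    then obtain e g1 g2 where q: "q = (e, g1, g2)" "e \<le> h N" and g: "\<forall>k. g1 k + g2 k = (h(N := 0)) k"
      by (auto simp: content_splits_def)
    have "g1 N = 0" "g2 N = 0"
      using g[rule_format, of N] by simp_all
    then show "detach (attach q) = q"
      using q by (auto simp: detach_def attach_def intro!: ext)
    show "attach q \<in> content_splits h"
      using q g by (auto simp: content_splits_def attach_def)
  next
    fix p
    assume "p \<in> content_splits h"
    then obtain g1 g2 where p: "p = (g1, g2)" and g: "\<forall>k. g1 k + g2 k = h k"
      by (auto simp: content_splits_def)
    have "g1 N + g2 N = h N"
      using g by blast
    then show "attach (detach p) = p"
      using p by (auto simp: detach_def attach_def intro!: ext)
    from \<open>g1 N + g2 N = h N\<close> have "g1 N \<le> h N"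
      by linarith
    then show "detach p \<in> ?S"
      using p g by (auto simp: content_splits_def detach_def)
  qed simp
  finally show ?thesis
    by simp
qed

lemma one_row_0 [simp]: "one_row a 0 = a"
  by (simp add: one_row_def)

lemma seq_size_one_row [simp]: "seq_size (one_row a) = a"
  by (simp add: seq_size_eq_sum_lessThan[of 1] one_row_def)

lemma partition_seq_one_row: "partition_seq (one_row a)"
  unfolding partition_seq_def finitely_supported_def one_row_def by auto

lemma interlaces_one_row_iff: "interlaces k (one_row a) \<longleftrightarrow> (\<exists>b\<le>a. k = one_row b)"
proof
  assume "interlaces k (one_row a)"
  then have le: "k i \<le> one_row a i" for i
    by (rule interlaces_le)
  have "k i = one_row (k 0) i" for i
    using le[of i] by (cases i) (auto simp: one_row_def)
  then have "k = one_row (k 0)"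
    by (rule ext)
  moreover have "k 0 \<le> a"
    using le[of 0] by simp
  ultimately show "\<exists>b\<le>a. k = one_row b"
    by blast
next
  assume "\<exists>b\<le>a. k = one_row b"
  then show "interlaces k (one_row a)"
    by (auto simp: interlaces_def one_row_def)
qed

lemma kostka_fun_upd_last:
  assumes f: "partition_seq f" and g: "\<forall>k\<ge>N. g k = 0"
  shows "kostka f (g(N := e)) = (\<Sum>k\<in>{k. interlaces k f \<and> seq_size f = seq_size k + e}. kostka k g)"
proof -
  have "g(N := e, N := 0) = g"
    using g by (auto intro!: ext)
  then show ?thesis
    using kostka_branching[OF f, of N "g(N := e)"] g by simp
qed

lemma kostka_one_row_fun_upd_last:
  assumes g: "\<forall>k\<ge>N. g k = 0"
  shows "kostka (one_row a) (g(N := e)) = (if e \<le> a then kostka (one_row (a - e)) g else 0)"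
proof -
  have "{k. interlaces k (one_row a) \<and> seq_size (one_row a) = seq_size k + e}
      = (if e \<le> a then {one_row (a - e)} else {})"
    by (auto simp: interlaces_one_row_iff intro!: exI[of _ "a - e"])
  then show ?thesis
    using kostka_fun_upd_last[OF partition_seq_one_row g] by simp
qed

lemma kostka_pieri_zero_content:
  assumes f: "partition_seq f"
  shows "content_conv (kostka f) (kostka (one_row a)) (\<lambda>_. 0)
       = (\<Sum>l\<in>{l. interlaces f l \<and> seq_size l = seq_size f + a}. kostka l (\<lambda>_. 0))"
proof -
  have fs: "finitely_supported f"
    using f by (rule partition_seq_finitely_supported)
  have one_row_zero: "one_row a = (\<lambda>_. 0) \<longleftrightarrow> a = 0"
  proof
    assume "one_row a = (\<lambda>_. 0)"
    then show "a = 0"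
      using one_row_0[of a] by simp
  qed (auto simp: one_row_def)
  have "content_conv (kostka f) (kostka (one_row a)) (\<lambda>_. 0)
      = kostka f (\<lambda>_. 0) * kostka (one_row a) (\<lambda>_. 0)"
  proof -
    have "content_splits (\<lambda>_. 0) = {(\<lambda>_. 0, \<lambda>_. 0)}"
      by (auto simp: content_splits_def)
    then show ?thesis
      by (simp add: content_conv_def)
  qed
  also have "\<dots> = (if f = (\<lambda>_. 0) \<and> a = 0 then 1 else 0)"
    using kostka_zero_content[OF fs]
      kostka_zero_content[OF partition_seq_finitely_supported[OF partition_seq_one_row]]
    by (simp add: one_row_zero)
  also have "\<dots> = (\<Sum>l\<in>{l. interlaces f l \<and> seq_size l = seq_size f + a}. if l = (\<lambda>_. 0) then 1 else 0)"
  proof -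
    have "interlaces f (\<lambda>_. 0) \<longleftrightarrow> f = (\<lambda>_. 0)"
      by (auto simp: interlaces_def)
    then show ?thesis
      using finite_interlacing_outer[OF fs] by (simp add: sum.delta eq_commute[of 0])
  qed
  also have "\<dots> = (\<Sum>l\<in>{l. interlaces f l \<and> seq_size l = seq_size f + a}. kostka l (\<lambda>_. 0))"
    using kostka_zero_content interlaces_finitely_supported_outer[OF _ fs]
    by (intro sum.cong) auto
  finally show ?thesis .
qed

lemma content_conv_kostka_one_row_last:
  assumes f: "partition_seq f" and h: "\<forall>k>N. h k = 0"
  shows "content_conv (kostka f) (kostka (one_row a)) h
       = (\<Sum>e\<le>h N. \<Sum>k\<in>{k. interlaces k f \<and> seq_size f = seq_size k + e \<and> h N - e \<le> a}.
            content_conv (kostka k) (kostka (one_row (a - (h N - e)))) (h(N := 0)))"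
proof -
  define K where "K e = {k. interlaces k f \<and> seq_size f = seq_size k + e \<and> h N - e \<le> a}" for e
  have h': "\<forall>k\<ge>N. (h(N := 0)) k = 0"
    using h by (simp add: le_less)
  have per_split: "kostka f ((fst p)(N := e)) * kostka (one_row a) ((snd p)(N := h N - e))
      = (\<Sum>k\<in>K e. kostka k (fst p) * kostka (one_row (a - (h N - e))) (snd p))"
    if split: "p \<in> content_splits (h(N := 0))" for p e
  proof -
    obtain g1 g2 where p: "p = (g1, g2)" and g: "\<And>k. g1 k + g2 k = (h(N := 0)) k"
      using split by (auto simp: content_splits_def)
    have "g1 k = 0 \<and> g2 k = 0" if "N \<le> k" for k
      using h' that g[of k] by simp
    then have "\<forall>k\<ge>N. fst p k = 0" "\<forall>k\<ge>N. snd p k = 0"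
      using p by simp_all
    then show ?thesis
      by (cases "h N - e \<le> a")
        (simp_all add: kostka_fun_upd_last[OF f] kostka_one_row_fun_upd_last K_def sum_distrib_right)
  qed
  have "content_conv (kostka f) (kostka (one_row a)) h
      = (\<Sum>e\<le>h N. \<Sum>p\<in>content_splits (h(N := 0)).
          kostka f ((fst p)(N := e)) * kostka (one_row a) ((snd p)(N := h N - e)))"
    unfolding content_conv_def split_def by (rule sum_content_splits_last)
  also have "\<dots> = (\<Sum>e\<le>h N. \<Sum>p\<in>content_splits (h(N := 0)). \<Sum>k\<in>K e.
      kostka k (fst p) * kostka (one_row (a - (h N - e))) (snd p))"
    using per_split by simp
  also have "\<dots> = (\<Sum>e\<le>h N. \<Sum>k\<in>K e. content_conv (kostka k) (kostka (one_row (a - (h N - e)))) (h(N := 0)))"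
    unfolding content_conv_def split_def by (intro sum.cong refl) (rule sum.swap)
  finally show ?thesis
    unfolding K_def .
qed

text \<open>Both sides of the induction step of the Pieri rule count the ways to pass from \<open>f\<close> to \<open>r\<close>:
  by removing a horizontal strip and then adding one, or the other way round.\<close>

lemma card_pieri_step_fibre:
  assumes f: "finitely_supported f"
  shows "card {x \<in> Sigma {..e} (\<lambda>e1. {k. interlaces k f \<and> seq_size f = seq_size k + e1 \<and> e - e1 \<le> a}).
            r \<in> {l. interlaces (snd x) l \<and> seq_size l = seq_size (snd x) + (a - (e - fst x))}}
       = card {l \<in> {l. interlaces f l \<and> seq_size l = seq_size f + a}.
            r \<in> {k. interlaces k l \<and> seq_size l = seq_size k + e}}"
    (is "card ?L = card ?R")
proof (cases "finitely_supported r \<and> seq_size r + e = seq_size f + a")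
  case True
  then have r: "finitely_supported r" and size: "seq_size r + e = seq_size f + a"
    by simp_all
  have "bij_betw snd ?L {k \<in> interlace_box f r. seq_size f \<le> seq_size k + e}"
  proof (rule bij_betw_byWitness[where f' = "\<lambda>k. (seq_size f - seq_size k, k)"])
    show "\<forall>x\<in>?L. (seq_size f - seq_size (snd x), snd x) = x"
      by auto
    show "\<forall>k\<in>{k \<in> interlace_box f r. seq_size f \<le> seq_size k + e}.
        snd (seq_size f - seq_size k, k) = k"
      by simp
    show "snd ` ?L \<subseteq> {k \<in> interlace_box f r. seq_size f \<le> seq_size k + e}"
      by (auto simp: interlace_box_iff)
    show "(\<lambda>k. (seq_size f - seq_size k, k)) ` {k \<in> interlace_box f r. seq_size f \<le> seq_size k + e} \<subseteq> ?L"
    proof (rule image_subsetI)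
      fix k
      assume "k \<in> {k \<in> interlace_box f r. seq_size f \<le> seq_size k + e}"
      then have k: "interlaces k f" "interlaces k r" "seq_size f \<le> seq_size k + e"
        by (simp_all add: interlace_box_iff)
      have "seq_size k \<le> seq_size f" "seq_size k \<le> seq_size r"
        using interlaces_seq_size_le k(1,2) f r by blast+
      then show "(seq_size f - seq_size k, k) \<in> ?L"
        using k size by auto
    qed
  qed
  then have "card ?L = card {k \<in> interlace_box f r. seq_size f \<le> seq_size k + e}"
    by (rule bij_betw_same_card)
  also have "\<dots> = card {l. interlaces f l \<and> interlaces r l \<and> seq_size l = seq_size f + a}"
    using card_common_inner_eq_card_common_outer[OF f r size] .
  also have "{l. interlaces f l \<and> interlaces r l \<and> seq_size l = seq_size f + a} = ?R"
    using size by auto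
  finally show ?thesis .
next
  case False
  have "finitely_supported r" if "interlaces k f" "interlaces k r" for k
    using that interlaces_finitely_supported_inner[OF _ f] interlaces_finitely_supported_outer by blast
  moreover have "finitely_supported r" if "interlaces f l" "interlaces r l" for l
    using that interlaces_finitely_supported_outer[OF _ f] interlaces_finitely_supported_inner by blast
  ultimately have L: "?L = {}" and R: "?R = {}"
    using False by auto
  show ?thesis
    unfolding L R by simp
qed

lemma kostka_pieri_step:
  assumes f: "partition_seq f" and h: "\<forall>k>N. h k = 0"
    and IH: "\<And>f a. partition_seq f \<Longrightarrow> content_conv (kostka f) (kostka (one_row a)) (h(N := 0))
                 = (\<Sum>l\<in>{l. interlaces f l \<and> seq_size l = seq_size f + a}. kostka l (h(N := 0)))"
  shows "content_conv (kostka f) (kostka (one_row a)) h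
       = (\<Sum>l\<in>{l. interlaces f l \<and> seq_size l = seq_size f + a}. kostka l h)"
proof -
  define e where "e = h N"
  define h' where "h' = h(N := 0)"
  define K where "K e1 = {k. interlaces k f \<and> seq_size f = seq_size k + e1 \<and> e - e1 \<le> a}" for e1
  define S where "S x = {l. interlaces (snd x) l \<and> seq_size l = seq_size (snd x) + (a - (e - fst x))}"
    for x :: "nat \<times> (nat \<Rightarrow> nat)"
  define B where "B = {l. interlaces f l \<and> seq_size l = seq_size f + a}"
  define T where "T l = {k. interlaces k l \<and> seq_size l = seq_size k + e}" for l
  have fs: "finitely_supported f"
    using f by (rule partition_seq_finitely_supported)
  have finK: "finite (K e1)" for e1
    unfolding K_def by (rule finite_interlacing_inner[OF fs])
  have "content_conv (kostka f) (kostka (one_row a)) h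
      = (\<Sum>e1\<le>e. \<Sum>k\<in>K e1. \<Sum>l\<in>S (e1, k). kostka l h')"
    unfolding content_conv_kostka_one_row_last[OF f h] h'_def S_def K_def e_def
    using IH interlaces_partition_seq_inner[OF _ f] by simp
  also have "\<dots> = (\<Sum>x\<in>Sigma {..e} K. \<Sum>l\<in>S x. kostka l h')"
    using finK by (simp add: sum.Sigma split_def)
  also have "\<dots> = (\<Sum>l\<in>B. \<Sum>k\<in>T l. kostka k h')"
  proof (rule sum_sum_eq_if_card_fibres_eq)
    show "finite (Sigma {..e} K)"
      using finK by blast
    show "finite (S x)" if "x \<in> Sigma {..e} K" for x
    proof -
      have "interlaces (snd x) f"
        using that by (auto simp: K_def)
      then show ?thesis
        unfolding S_def by (rule finite_interlacing_outer[OF interlaces_finitely_supported_inner[OF _ fs]])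
    qed
    show "finite B"
      unfolding B_def by (rule finite_interlacing_outer[OF fs])
    show "finite (T l)" if "l \<in> B" for l
    proof -
      have "interlaces f l"
        using that by (simp add: B_def)
      then show ?thesis
        unfolding T_def by (rule finite_interlacing_inner[OF interlaces_finitely_supported_outer[OF _ fs]])
    qed
    show "card {x \<in> Sigma {..e} K. r \<in> S x} = card {l \<in> B. r \<in> T l}" for r
      unfolding K_def S_def B_def T_def by (rule card_pieri_step_fibre[OF fs])
  qed
  also have "\<dots> = (\<Sum>l\<in>B. kostka l h)"
    using kostka_branching[OF interlaces_partition_seq_outer[OF _ f] h]
    unfolding B_def T_def e_def h'_def by simp
  finally show ?thesis
    unfolding B_def .
qed

lemma kostka_pieri:
  assumes f: "partition_seq f" and h: "finitely_supported h"
  shows "content_conv (kostka f) (kostka (one_row a)) h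
       = (\<Sum>l\<in>{l. interlaces f l \<and> seq_size l = seq_size f + a}. kostka l h)"
proof -
  obtain N where N: "\<forall>k\<ge>N. h k = 0"
    using h by (rule finitely_supportedE)
  then show ?thesis
    using f
  proof (induction N arbitrary: f a h)
    case 0
    then have "h = (\<lambda>_. 0)"
      by auto
    then show ?case
      using kostka_pieri_zero_content[OF "0.prems"(2)] by simp
  next
    case (Suc N)
    have h: "\<forall>k>N. h k = 0"
      using Suc.prems(1) Suc_leI by blast
    then have "\<forall>k\<ge>N. (h(N := 0)) k = 0"
      by (simp add: le_less)
    then show ?case
      using kostka_pieri_step[OF Suc.prems(2) h] Suc.IH by blast
  qed
qed

definition part_seq :: "nat list \<Rightarrow> nat \<Rightarrow> nat" where
  "part_seq la i = (if i < length la then la ! i else 0)"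

lemma finitely_supported_part_seq: "finitely_supported (part_seq la)"
  unfolding finitely_supported_def part_seq_def by (intro exI[of _ "length la"]) auto

lemma partition_seq_part_seq:
  assumes "is_partition la"
  shows "partition_seq (part_seq la)"
proof -
  have "part_seq la (Suc i) \<le> part_seq la i" for i
    using assms sorted_wrt_nth_less[of "(\<ge>)" la i "Suc i"]
    by (auto simp: part_seq_def is_partition_def)
  then show ?thesis
    by (simp add: partition_seq_def finitely_supported_part_seq)
qed

lemma part_seq_pos_iff: "is_partition la \<Longrightarrow> 0 < part_seq la i \<longleftrightarrow> i < length la"
  by (auto simp: is_partition_def part_seq_def nth_mem)

lemma inj_on_part_seq: "inj_on part_seq {la. is_partition la}"
proof (rule inj_onI)
  fix la la'
  assume la: "la \<in> {la. is_partition la}" and la': "la' \<in> {la. is_partition la}"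
    and eq: "part_seq la = part_seq la'"
  have "i < length la \<longleftrightarrow> i < length la'" for i
    using part_seq_pos_iff[of la i] part_seq_pos_iff[of la' i] la la' eq by simp
  then have "length la = length la'"
    by (meson less_irrefl nat_neq_iff)
  moreover have "la ! i = la' ! i" if "i < length la" for i
    using fun_cong[OF eq, of i] that calculation by (simp add: part_seq_def)
  ultimately show "la = la'"
    by (rule nth_equalityI)
qed

lemma part_seq_surj:
  assumes f: "partition_seq f"
  obtains la where "is_partition la" and "part_seq la = f"
proof -
  obtain L0 where L0: "\<forall>i\<ge>L0. f i = 0"
    using f partition_seq_finitely_supported finitely_supportedE by blast
  define L where "L = (LEAST i. f i = 0)"
  have "f L = 0"
    unfolding L_def by (rule LeastI[of _ L0]) (use L0 in auto)
  then have above: "f i = 0" if "L \<le> i" for i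
    using that lift_Suc_antimono_le[of f L i] partition_seq_Suc_le[OF f] by auto
  have below: "0 < f i" if "i < L" for i
    using that not_less_Least unfolding L_def by blast
  have "is_partition (map f [0..<L])"
    unfolding is_partition_def sorted_wrt_iff_nth_less
    using lift_Suc_antimono_le[of f] partition_seq_Suc_le[OF f] below by auto
  moreover have "part_seq (map f [0..<L]) = f"
    using above by (auto simp: part_seq_def)
  ultimately show ?thesis
    using that by blast
qed

lemma bij_betw_part_seq:
  "bij_betw part_seq {la. is_partition la \<and> Q (part_seq la)} {f. partition_seq f \<and> Q f}"
proof (rule bij_betw_imageI)
  show "inj_on part_seq {la. is_partition la \<and> Q (part_seq la)}"
    using inj_on_part_seq by (rule inj_on_subset) blast
  show "part_seq ` {la. is_partition la \<and> Q (part_seq la)} = {f. partition_seq f \<and> Q f}"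
    using partition_seq_part_seq part_seq_surj by (auto simp: image_iff) metis
qed

lemma seq_size_part_seq: "seq_size (part_seq la) = sum_list la"
proof -
  have "seq_size (part_seq la) = (\<Sum>i<length la. la ! i)"
    by (subst seq_size_eq_sum_lessThan[of "length la"]) (auto simp: part_seq_def)
  then show ?thesis
    by (simp add: sum_list_sum_nth atLeast0LessThan)
qed

lemma first_part_eq_part_seq: "first_part la = part_seq la 0"
  by (cases la) (simp_all add: first_part_def part_seq_def)

lemma schur_eq_kostka: "schur la m = int (kostka (part_seq la) (Poly_Mapping.lookup m))"
proof -
  have "cells la = diagram (part_seq la)"
    by (auto simp: cells_def diagram_def part_seq_def split: if_splits)
  then show ?thesis
    by (simp add: schur_def kostka_def ssyt_def ssyt_seq_def content_def has_content_def)
qed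

section \<open>Uniqueness of Schur expansions\<close>

lemma ssyt_seq_row_le_entry:
  assumes T: "T \<in> ssyt_seq f" and f: "partition_seq f"
  shows "(i, j) \<in> diagram f \<Longrightarrow> i \<le> T (i, j)"
proof (induction i)
  case 0
  then show ?case
    by simp
next
  case (Suc i)
  have "(i, j) \<in> diagram f"
    using Suc.prems partition_seq_Suc_le[OF f, of i] by (simp add: diagram_def)
  then have "i \<le> T (i, j)"
    by (rule Suc.IH)
  also have "\<dots> < T (Suc i, j)"
    using ssyt_seq_col[OF T Suc.prems] .
  finally show ?case
    by simp
qed

lemma kostka_nonzero_dominates:
  assumes f: "partition_seq f" and K: "kostka f h \<noteq> 0"
  shows "(\<Sum>i\<le>k. h i) \<le> (\<Sum>i\<le>k. f i)"
proof -
  have fs: "finitely_supported f"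
    using f by (rule partition_seq_finitely_supported)
  from K have "{T \<in> ssyt_seq f. has_content f T h} \<noteq> {}"
    unfolding kostka_def by (metis card.empty)
  then obtain T where T: "T \<in> ssyt_seq f" "has_content f T h"
    by blast
  have "(\<Sum>i\<le>k. h i) = (\<Sum>v\<le>k. card {c \<in> diagram f. T c = v})"
    using T(2) by (simp add: has_content_def)
  also have "\<dots> = card (\<Union>v\<le>k. {c \<in> diagram f. T c = v})"
    by (rule card_UN_disjoint[symmetric]) (use finite_diagram[OF fs] in auto)
  also have "\<dots> \<le> card (Sigma {..k} (\<lambda>i. {..<f i}))"
  proof (rule card_mono)
    show "(\<Union>v\<le>k. {c \<in> diagram f. T c = v}) \<subseteq> Sigma {..k} (\<lambda>i. {..<f i})"
    proof
      fix c
      assume "c \<in> (\<Union>v\<le>k. {c \<in> diagram f. T c = v})"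
      moreover obtain i j where "c = (i, j)"
        by (cases c)
      ultimately have c: "c = (i, j)" "(i, j) \<in> diagram f" "T (i, j) \<le> k"
        by auto
      then have "i \<le> T (i, j)"
        using ssyt_seq_row_le_entry[OF T(1) f] by blast
      then show "c \<in> Sigma {..k} (\<lambda>i. {..<f i})"
        using c by (simp add: diagram_def)
    qed
  qed simp
  also have "\<dots> = (\<Sum>i\<le>k. f i)"
    by simp
  finally show ?thesis .
qed

lemma kostka_self_nonzero:
  assumes f: "partition_seq f"
  shows "kostka f f \<noteq> 0"
proof -
  define T where "T = (\<lambda>(i, j). if j < f i then i else 0)"
  have "T \<in> ssyt_seq f"
  proof (rule ssyt_seqI)
    fix i j
    assume "(Suc i, j) \<in> diagram f"
    then show "T (i, j) < T (Suc i, j)"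
      using partition_seq_Suc_le[OF f, of i] by (simp add: T_def diagram_def)
  qed (auto simp: T_def diagram_def)
  moreover have "has_content f T f"
    unfolding has_content_def
  proof
    fix k
    have "{c \<in> diagram f. T c = k} = {k} \<times> {..<f k}"
      by (auto simp: T_def diagram_def)
    then show "f k = card {c \<in> diagram f. T c = k}"
      by simp
  qed
  ultimately have "{T \<in> ssyt_seq f. has_content f T f} \<noteq> {}"
    by blast
  then show ?thesis
    unfolding kostka_def
    using finite_ssyt_content[OF partition_seq_finitely_supported[OF f] partition_seq_finitely_supported[OF f]]
    by simp
qed

lemma sum_partial_sums_less:
  fixes g1 g2 :: "nat \<Rightarrow> nat"
  assumes z1: "\<forall>i\<ge>K. g1 i = 0" and z2: "\<forall>i\<ge>K. g2 i = 0"
    and dom: "\<And>k. (\<Sum>i\<le>k. g2 i) \<le> (\<Sum>i\<le>k. g1 i)" and ne: "g1 \<noteq> g2"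
  shows "(\<Sum>k<K. \<Sum>i\<le>k. g2 i) < (\<Sum>k<K. \<Sum>i\<le>k. g1 i)"
proof -
  obtain i0 where "g1 i0 \<noteq> g2 i0"
    using ne by auto
  define k0 where "k0 = (LEAST i. g1 i \<noteq> g2 i)"
  have k0: "g1 k0 \<noteq> g2 k0"
    unfolding k0_def by (rule LeastI) (rule \<open>g1 i0 \<noteq> g2 i0\<close>)
  have "g1 i = g2 i" if "i < k0" for i
    using not_less_Least[of i "\<lambda>i. g1 i \<noteq> g2 i"] that unfolding k0_def by blast
  then have below: "(\<Sum>i<k0. g2 i) = (\<Sum>i<k0. g1 i)"
    by (intro sum.cong) auto
  have "k0 < K"
    using k0 z1 z2 by (metis not_le)
  have "g2 k0 < g1 k0"
    using dom[of k0] below k0 by (simp add: lessThan_Suc_atMost[symmetric])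
  then have "(\<Sum>i\<le>k0. g2 i) < (\<Sum>i\<le>k0. g1 i)"
    using below by (simp add: lessThan_Suc_atMost[symmetric])
  then show ?thesis
    using dom \<open>k0 < K\<close> by (intro sum_strict_mono_ex1) auto
qed

lemma lookup_Abs_poly_mapping_part_seq:
  "Poly_Mapping.lookup (Abs_poly_mapping (part_seq la)) = part_seq la"
  by (rule lookup_Abs_poly_mapping, rule finite_subset[of _ "{..<length la}"]) (auto simp: part_seq_def)

text \<open>Kostka numbers are unitriangular with respect to dominance, so evaluating a vanishing
  combination at the monomial of a dominance-maximal \<open>\<lambda>\<close> isolates its coefficient.\<close>

lemma schur_linearly_independent:
  assumes S: "finite S" and partitions: "\<And>la. la \<in> S \<Longrightarrow> is_partition la"
    and zero: "\<And>m. (\<Sum>la\<in>S. D la * schur la m) = 0" and la: "la \<in> S"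
  shows "D la = 0"
proof (rule ccontr)
  assume "D la \<noteq> 0"
  define S0 where "S0 = {la \<in> S. D la \<noteq> 0}"
  define K where "K = Max (length ` S)"
  define phi where "phi la = (\<Sum>k<K. \<Sum>i\<le>k. part_seq la i)" for la
  have S0: "finite S0" "S0 \<noteq> {}"
    using S la \<open>D la \<noteq> 0\<close> by (auto simp: S0_def)
  have "Max (phi ` S0) \<in> phi ` S0"
    using S0 by (intro Max_in) auto
  then obtain la0 where la0: "la0 \<in> S" "D la0 \<noteq> 0" and la0_max: "phi la0 = Max (phi ` S0)"
    by (auto simp: S0_def)
  have max: "phi la \<le> phi la0" if "la \<in> S" "D la \<noteq> 0" for la
    unfolding la0_max using that S0(1) by (intro Max_ge) (auto simp: S0_def)
  have vanish: "\<forall>i\<ge>K. part_seq la i = 0" if "la \<in> S" for la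
  proof -
    have "length la \<le> K"
      unfolding K_def using that S by (intro Max_ge) auto
    then show ?thesis
      by (simp add: part_seq_def)
  qed
  define m0 where "m0 = Abs_poly_mapping (part_seq la0)"
  have others: "D la * schur la m0 = 0" if "la \<in> S - {la0}" for la
  proof (rule ccontr)
    assume nonzero: "D la * schur la m0 \<noteq> 0"
    have laS: "la \<in> S" and "la \<noteq> la0"
      using that by simp_all
    then have "part_seq la \<noteq> part_seq la0"
      using inj_onD[OF inj_on_part_seq, of la la0] partitions la0(1) by blast
    moreover have "kostka (part_seq la) (part_seq la0) \<noteq> 0"
      using nonzero by (simp add: schur_eq_kostka m0_def lookup_Abs_poly_mapping_part_seq)
    then have "(\<Sum>i\<le>k. part_seq la0 i) \<le> (\<Sum>i\<le>k. part_seq la i)" for k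
      by (rule kostka_nonzero_dominates[OF partition_seq_part_seq[OF partitions[OF laS]]])
    ultimately have "phi la0 < phi la"
      unfolding phi_def by (rule sum_partial_sums_less[OF vanish[OF laS] vanish[OF la0(1)], rotated])
    then show False
      using max[OF laS] nonzero by simp
  qed
  have "(\<Sum>la\<in>S. D la * schur la m0) = D la0 * schur la0 m0 + (\<Sum>la\<in>S - {la0}. D la * schur la m0)"
    by (rule sum.remove[OF S la0(1)])
  also have "(\<Sum>la\<in>S - {la0}. D la * schur la m0) = 0"
    using others by (rule sum.neutral[rule_format])
  finally have "(\<Sum>la\<in>S. D la * schur la m0) = D la0 * schur la0 m0"
    by simp
  moreover have "schur la0 m0 \<noteq> 0"
    using kostka_self_nonzero[OF partition_seq_part_seq[OF partitions[OF la0(1)]]]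
    by (simp add: schur_eq_kostka m0_def lookup_Abs_poly_mapping_part_seq)
  ultimately show False
    using zero[of m0] la0(2) by simp
qed

lemma schur_expansion_unique:
  assumes c: "schur_expansion G c" and c': "schur_expansion G c'"
  shows "c = c'"
proof
  fix la
  define S where "S = {la. c la \<noteq> 0} \<union> {la. c' la \<noteq> 0}"
  have finS: "finite S" and partS: "\<And>la. la \<in> S \<Longrightarrow> is_partition la"
    using c c' by (auto simp: S_def schur_expansion_def)
  have expand: "G m = (\<Sum>la\<in>S. d la * schur la m)" if "schur_expansion G d" "{la. d la \<noteq> 0} \<subseteq> S" for d m
    using that finS by (auto simp: schur_expansion_def intro: sum.mono_neutral_left)
  have zero: "(\<Sum>la\<in>S. (c la - c' la) * schur la m) = 0" for m
    using expand[OF c] expand[OF c'] by (simp add: S_def left_diff_distrib sum_subtractf)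
  have "c la - c' la = 0" if "la \<in> S"
    using schur_linearly_independent[of S "\<lambda>la. c la - c' la", OF finS partS zero that] .
  then show "c la = c' la"
    by (cases "la \<in> S") (auto simp: S_def)
qed

lemma first_row_part_eq:
  assumes "schur_expansion G c"
  shows "first_row_part p G = (\<lambda>m. \<Sum>la\<in>{la. c la \<noteq> 0 \<and> first_part la = p}. c la * schur la m)"
proof -
  have "(THE c. schur_expansion G c) = c"
    using assms schur_expansion_unique by blast
  then show ?thesis
    by (simp add: first_row_part_def)
qed

section \<open>The Pieri rule for Schur functions\<close>

lemma finitely_supported_lookup: "finitely_supported (Poly_Mapping.lookup m)"
proof -
  obtain L where "\<forall>i\<in>{k. Poly_Mapping.lookup m k \<noteq> 0}. i < L"
    using finite_lookup[of m] finite_nat_set_iff_bounded by blast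
  then have "\<forall>i\<ge>L. Poly_Mapping.lookup m i = 0"
    by (meson mem_Collect_eq not_le)
  then show ?thesis
    unfolding finitely_supported_def by blast
qed

lemma bij_betw_lookup_content_splits:
  "bij_betw (\<lambda>(m1, m2). (Poly_Mapping.lookup m1, Poly_Mapping.lookup m2))
     {(m1, m2). m1 + m2 = m} (content_splits (Poly_Mapping.lookup m))"
proof (rule bij_betw_byWitness[where f' = "\<lambda>(g1, g2). (Abs_poly_mapping g1, Abs_poly_mapping g2)"])
  have finite_part: "finite {x. g x \<noteq> 0}" if "\<And>x. g x \<le> Poly_Mapping.lookup m x" for g :: "nat \<Rightarrow> nat"
  proof (rule finite_subset[OF subsetI finite_lookup[of m]])
    fix x
    assume "x \<in> {x. g x \<noteq> 0}"
    then show "x \<in> {k. Poly_Mapping.lookup m k \<noteq> 0}"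
      using that[of x] by simp
  qed
  have parts: "finite {x. g1 x \<noteq> 0}" "finite {x. g2 x \<noteq> 0}"
    if "(g1, g2) \<in> content_splits (Poly_Mapping.lookup m)" for g1 g2
  proof -
    have "g1 x \<le> Poly_Mapping.lookup m x" "g2 x \<le> Poly_Mapping.lookup m x" for x
      using that by (auto simp: content_splits_def intro: le_add1 le_add2 elim!: allE[of _ x])
    then show "finite {x. g1 x \<noteq> 0}" "finite {x. g2 x \<noteq> 0}"
      by (blast intro: finite_part)+
  qed
  show "\<forall>q\<in>{(m1, m2). m1 + m2 = m}.
      (\<lambda>(g1, g2). (Abs_poly_mapping g1, Abs_poly_mapping g2))
        ((\<lambda>(m1, m2). (Poly_Mapping.lookup m1, Poly_Mapping.lookup m2)) q) = q"
    by (auto simp: lookup_inverse)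
  show "\<forall>p\<in>content_splits (Poly_Mapping.lookup m).
      (\<lambda>(m1, m2). (Poly_Mapping.lookup m1, Poly_Mapping.lookup m2))
        ((\<lambda>(g1, g2). (Abs_poly_mapping g1, Abs_poly_mapping g2)) p) = p"
    using parts by auto
  show "(\<lambda>(m1, m2). (Poly_Mapping.lookup m1, Poly_Mapping.lookup m2)) ` {(m1, m2). m1 + m2 = m}
      \<subseteq> content_splits (Poly_Mapping.lookup m)"
    by (auto simp: content_splits_def lookup_add)
  show "(\<lambda>(g1, g2). (Abs_poly_mapping g1, Abs_poly_mapping g2)) ` content_splits (Poly_Mapping.lookup m)
      \<subseteq> {(m1, m2). m1 + m2 = m}"
  proof clarify
    fix g1 g2
    assume g: "(g1, g2) \<in> content_splits (Poly_Mapping.lookup m)"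
    then show "Abs_poly_mapping g1 + Abs_poly_mapping g2 = m"
      using parts[OF g] by (intro poly_mapping_eqI) (auto simp: lookup_add content_splits_def)
  qed
qed

lemma sf_mult_kostka:
  "sf_mult (\<lambda>m. int (F (Poly_Mapping.lookup m))) (\<lambda>m. int (G (Poly_Mapping.lookup m))) m
     = int (content_conv F G (Poly_Mapping.lookup m))"
proof -
  have "sf_mult (\<lambda>m. int (F (Poly_Mapping.lookup m))) (\<lambda>m. int (G (Poly_Mapping.lookup m))) m
      = (\<Sum>(g1, g2)\<in>content_splits (Poly_Mapping.lookup m). int (F g1) * int (G g2))"
    unfolding sf_mult_def using sum.reindex_bij_betw[OF bij_betw_lookup_content_splits,
        of "\<lambda>(g1, g2). int (F g1) * int (G g2)"]
    by (simp add: split_def)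
  then show ?thesis
    by (simp add: content_conv_def split_def)
qed

lemma hsf_eq_kostka_one_row: "hsf (int a) = (\<lambda>m. int (kostka (one_row a) (Poly_Mapping.lookup m)))"
proof -
  have "part_seq (if a = 0 then [] else [a]) = one_row a"
    by (auto simp: part_seq_def one_row_def)
  then show ?thesis
    by (auto simp: hsf_def schur_eq_kostka)
qed

definition pieri_terms :: "nat list \<Rightarrow> int \<Rightarrow> nat list set" where
  "pieri_terms mu k = {la. is_partition la \<and> interlaces (part_seq mu) (part_seq la)
     \<and> int (sum_list la) = int (sum_list mu) + k}"

lemma pieri_terms_eq_part_seq_preimage:
  assumes mu: "is_partition mu"
  shows "pieri_terms mu (int a) = {la. is_partition la \<and>
           part_seq la \<in> {l. interlaces (part_seq mu) l \<and> seq_size l = seq_size (part_seq mu) + a}}"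
  by (auto simp: pieri_terms_def seq_size_part_seq)

lemma bij_betw_part_seq_pieri_terms:
  assumes mu: "is_partition mu"
  shows "bij_betw part_seq (pieri_terms mu (int a))
           {l. interlaces (part_seq mu) l \<and> seq_size l = seq_size (part_seq mu) + a}"
proof -
  have "{f. partition_seq f \<and> f \<in> {l. interlaces (part_seq mu) l \<and> seq_size l = seq_size (part_seq mu) + a}}
      = {l. interlaces (part_seq mu) l \<and> seq_size l = seq_size (part_seq mu) + a}"
    using interlaces_partition_seq_outer[OF _ partition_seq_part_seq[OF mu]] by blast
  then show ?thesis
    using bij_betw_part_seq[of "\<lambda>f. f \<in> {l. interlaces (part_seq mu) l \<and> seq_size l = seq_size (part_seq mu) + a}"]
    unfolding pieri_terms_eq_part_seq_preimage[OF mu] by simp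
qed

lemma pieri_terms_negative:
  assumes "k < 0"
  shows "pieri_terms mu k = {}"
proof -
  have "sum_list mu \<le> sum_list la" if "interlaces (part_seq mu) (part_seq la)" for la
    using interlaces_seq_size_le[OF that finitely_supported_part_seq] by (simp add: seq_size_part_seq)
  then show ?thesis
    using assms by (fastforce simp: pieri_terms_def)
qed

lemma finite_pieri_terms:
  assumes mu: "is_partition mu"
  shows "finite (pieri_terms mu k)"
proof (cases "k < 0")
  case False
  then obtain a where "k = int a"
    by (metis nonneg_int_cases not_less)
  then show ?thesis
    using bij_betw_finite[OF bij_betw_part_seq_pieri_terms[OF mu]]
      finite_interlacing_outer[OF partition_seq_finitely_supported[OF partition_seq_part_seq[OF mu]]]
    by simp
qed (simp add: pieri_terms_negative)

lemma schur_mult_hsf: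
  assumes mu: "is_partition mu"
  shows "sf_mult (schur mu) (hsf k) = (\<lambda>m. \<Sum>la\<in>pieri_terms mu k. schur la m)"
proof (cases "k < 0")
  case True
  then show ?thesis
    by (simp add: pieri_terms_negative hsf_def sf_zero_def sf_mult_def)
next
  case False
  then obtain a where a: "k = int a"
    by (metis nonneg_int_cases not_less)
  show ?thesis
  proof
    fix m
    let ?HS = "{l. interlaces (part_seq mu) l \<and> seq_size l = seq_size (part_seq mu) + a}"
    have "sf_mult (schur mu) (hsf k) m
        = int (content_conv (kostka (part_seq mu)) (kostka (one_row a)) (Poly_Mapping.lookup m))"
      unfolding a hsf_eq_kostka_one_row schur_eq_kostka[abs_def] by (rule sf_mult_kostka)
    also have "\<dots> = (\<Sum>l\<in>?HS. int (kostka l (Poly_Mapping.lookup m)))"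
      by (simp add: kostka_pieri[OF partition_seq_part_seq[OF mu] finitely_supported_lookup])
    also have "\<dots> = (\<Sum>la\<in>pieri_terms mu k. int (kostka (part_seq la) (Poly_Mapping.lookup m)))"
      unfolding a by (rule sum.reindex_bij_betw[OF bij_betw_part_seq_pieri_terms[OF mu], symmetric])
    finally show "sf_mult (schur mu) (hsf k) m = (\<Sum>la\<in>pieri_terms mu k. schur la m)"
      by (simp add: schur_eq_kostka)
  qed
qed

lemma first_row_part_schur_mult_hsf:
  assumes mu: "is_partition mu"
  shows "first_row_part p (sf_mult (schur mu) (hsf k))
       = (\<lambda>m. \<Sum>la\<in>{la \<in> pieri_terms mu k. first_part la = p}. schur la m)"
proof -
  define c where "c la = (if la \<in> pieri_terms mu k then 1 else (0::int))" for la
  have support: "{la. c la \<noteq> 0} = pieri_terms mu k"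
    by (simp add: c_def)
  have "schur_expansion (sf_mult (schur mu) (hsf k)) c"
    unfolding schur_expansion_def support schur_mult_hsf[OF mu]
    using finite_pieri_terms[OF mu] by (auto simp: c_def pieri_terms_def)
  moreover have "{la. c la \<noteq> 0 \<and> first_part la = p} = {la \<in> pieri_terms mu k. first_part la = p}"
    by (auto simp: c_def)
  ultimately show ?thesis
    by (simp add: first_row_part_eq c_def)
qed

section \<open>The symmetry of the first-row projections\<close>

lemma length_le_sum_list: "\<forall>x\<in>set xs. (0::nat) < x \<Longrightarrow> length xs \<le> sum_list xs"
  by (induction xs) auto

lemma finite_partitions_of: "finite (partitions_of n)"
proof (rule finite_subset)
  show "partitions_of n \<subseteq> {xs. set xs \<subseteq> {..nat n} \<and> length xs \<le> nat n}"
  proof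
    fix la
    assume "la \<in> partitions_of n"
    then have la: "is_partition la" "int (sum_list la) = n"
      by (simp_all add: partitions_of_def)
    have "length la \<le> sum_list la"
      using la(1) length_le_sum_list by (simp add: is_partition_def)
    moreover have "set la \<subseteq> {..sum_list la}"
      using member_le_sum_list by fastforce
    ultimately show "la \<in> {xs. set xs \<subseteq> {..nat n} \<and> length xs \<le> nat n}"
      using la(2) by auto
  qed
  show "finite {xs. set xs \<subseteq> {..nat n} \<and> length xs \<le> nat n}"
    by (rule finite_lists_length_le) simp
qed

lemma card_pieri_fibre:
  assumes la: "is_partition la" "first_part la = p" and nu: "is_partition nu" "first_part nu = p'"
  shows "card {mu \<in> partitions_of n.
            (la, nu) \<in> {la \<in> pieri_terms mu k. first_part la = p} \<times> {nu \<in> pieri_terms mu k'. first_part nu = p'}}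
       = card {g \<in> interlace_box (part_seq la) (part_seq nu). int (seq_size g) = n
            \<and> int (sum_list la) = int (seq_size g) + k \<and> int (sum_list nu) = int (seq_size g) + k'}"
proof -
  let ?Q = "\<lambda>g. interlaces g (part_seq la) \<and> interlaces g (part_seq nu) \<and> int (seq_size g) = n
    \<and> int (sum_list la) = int (seq_size g) + k \<and> int (sum_list nu) = int (seq_size g) + k'"
  have "{mu \<in> partitions_of n.
          (la, nu) \<in> {la \<in> pieri_terms mu k. first_part la = p} \<times> {nu \<in> pieri_terms mu k'. first_part nu = p'}}
      = {mu. is_partition mu \<and> ?Q (part_seq mu)}"
    using la nu by (auto simp: pieri_terms_def partitions_of_def seq_size_part_seq)
  moreover have "{g. partition_seq g \<and> ?Q g} = {g \<in> interlace_box (part_seq la) (part_seq nu). int (seq_size g) = n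
      \<and> int (sum_list la) = int (seq_size g) + k \<and> int (sum_list nu) = int (seq_size g) + k'}"
    using interlaces_partition_seq_inner[OF _ partition_seq_part_seq[OF la(1)]]
    by (auto simp: interlace_box_iff)
  ultimately show ?thesis
    using bij_betw_same_card[OF bij_betw_part_seq[of ?Q]] by simp
qed

lemma card_pieri_fibres_symmetric:
  fixes d a b p p' :: nat
  defines "M \<equiv> max p p'"
  shows "card {mu \<in> partitions_of (int d).
            x \<in> {la \<in> pieri_terms mu (int a). first_part la = p}
               \<times> {nu \<in> pieri_terms mu (int b). first_part nu = p'}}
       = card {mu \<in> partitions_of (int d + int a + int b - int M).
            x \<in> {la \<in> pieri_terms mu (int M - int b). first_part la = p}
               \<times> {nu \<in> pieri_terms mu (int M - int a). first_part nu = p'}}"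
proof -
  obtain la nu where x: "x = (la, nu)"
    by (cases x)
  show ?thesis
  proof (cases "is_partition la \<and> first_part la = p \<and> is_partition nu \<and> first_part nu = p'")
    case True
    then have la: "is_partition la" "first_part la = p" and nu: "is_partition nu" "first_part nu = p'"
      by simp_all
    then have M: "M = max (part_seq la 0) (part_seq nu 0)"
      by (simp add: M_def first_part_eq_part_seq)
    show ?thesis
      unfolding x card_pieri_fibre[OF la nu]
    proof (rule card_interlace_box_reflect[OF finitely_supported_part_seq finitely_supported_part_seq])
      fix s t
      assume "s + t + max (part_seq la 0) (part_seq nu 0) = seq_size (part_seq la) + seq_size (part_seq nu)"
      then have "int s + int t + int M = int (sum_list la) + int (sum_list nu)"
        unfolding M seq_size_part_seq by linarith
      then show "int s = int d \<and> int (sum_list la) = int s + int a \<and> int (sum_list nu) = int s + int b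
          \<longleftrightarrow> int t = int d + int a + int b - int M
            \<and> int (sum_list la) = int t + (int M - int b) \<and> int (sum_list nu) = int t + (int M - int a)"
        by linarith
    qed
  next
    case False
    then have L: "{mu \<in> partitions_of (int d). x \<in> {la \<in> pieri_terms mu (int a). first_part la = p}
                     \<times> {nu \<in> pieri_terms mu (int b). first_part nu = p'}} = {}"
      and R: "{mu \<in> partitions_of (int d + int a + int b - int M).
                x \<in> {la \<in> pieri_terms mu (int M - int b). first_part la = p}
                   \<times> {nu \<in> pieri_terms mu (int M - int a). first_part nu = p'}} = {}"
      by (auto simp: x pieri_terms_def)
    show ?thesis
      unfolding L R ..
  qed
qed

lemma sum_sf_tensor_first_row_parts:
  assumes "finite P" and "\<And>mu. mu \<in> P \<Longrightarrow> is_partition mu"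
  shows "(\<Sum>mu\<in>P. sf_tensor (first_row_part p (sf_mult (schur mu) (hsf k)))
                           (first_row_part p' (sf_mult (schur mu) (hsf k'))) z)
       = (\<Sum>mu\<in>P. \<Sum>(la, nu)\<in>{la \<in> pieri_terms mu k. first_part la = p}
                              \<times> {nu \<in> pieri_terms mu k'. first_part nu = p'}.
            schur la (fst z) * schur nu (snd z))"
proof (rule sum.cong[OF refl])
  fix mu
  assume "mu \<in> P"
  then show "sf_tensor (first_row_part p (sf_mult (schur mu) (hsf k)))
                       (first_row_part p' (sf_mult (schur mu) (hsf k'))) z
      = (\<Sum>(la, nu)\<in>{la \<in> pieri_terms mu k. first_part la = p}
                    \<times> {nu \<in> pieri_terms mu k'. first_part nu = p'}. schur la (fst z) * schur nu (snd z))"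
    using assms(2) by (simp add: sf_tensor_def first_row_part_schur_mult_hsf split_def
        sum_product sum.cartesian_product)
qed

theorem mainTheorem3:
  fixes d a b p p' :: nat
  defines "M \<equiv> max p p'"
  shows "(\<lambda>z. \<Sum>\<mu>\<in>partitions_of (int d).
            sf_tensor (first_row_part p (sf_mult (schur \<mu>) (hsf (int a))))
                      (first_row_part p' (sf_mult (schur \<mu>) (hsf (int b)))) z)
       = (\<lambda>z. \<Sum>\<mu>\<in>partitions_of (int d + int a + int b - int M).
            sf_tensor (first_row_part p (sf_mult (schur \<mu>) (hsf (int M - int b))))
                      (first_row_part p' (sf_mult (schur \<mu>) (hsf (int M - int a)))) z)"
proof -
  have partitions: "\<And>mu n. mu \<in> partitions_of n \<Longrightarrow> is_partition mu"
    by (simp add: partitions_of_def)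
  show ?thesis
    by (simp only: sum_sf_tensor_first_row_parts[OF finite_partitions_of partitions])
      (intro ext sum_sum_eq_if_card_fibres_eq;
        auto simp: finite_partitions_of finite_pieri_terms partitions M_def card_pieri_fibres_symmetric)
qed

end
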